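(* Let $D\in\mathbb{R}^{d\times d}$ be diagonal, $\boldsymbol{\tau},\boldsymbol{\zeta}\in[0,\infty)^d$, and define the hyperrectangles $\Theta(\boldsymbol{\tau})=\{\boldsymbol{\theta}\in\mathbb{R}^d:|\theta_i|\le\tau_i\ \forall i\}$ and $\Delta(\boldsymbol{\zeta})=\{\boldsymbol{\delta}\in\mathbb{R}^d:|\delta_i|\le\zeta_i\ \forall i\}$. For $\boldsymbol{\theta}\in\Theta(\boldsymbol{\tau}),\boldsymbol{\delta}\in\Delta(\boldsymbol{\zeta})$ one observes independent $\mathbf{x}\sim\mathcal{N}(D\boldsymbol{\theta}+\boldsymbol{\delta},I_d)$ and $\mathbf{y}\sim\mathcal{N}(\boldsymbol{\theta},I_d)$. Let $$R_L(\Theta(\boldsymbol{\tau}),\Delta(\boldsymbol{\zeta}),D)=\inf_{A,B\in\mathbb{R}^{d\times d}}\sup_{\boldsymbol{\theta}\in\Theta(\boldsymbol{\tau}),\boldsymbol{\delta}\in\Delta(\boldsymbol{\zeta})}\mathbb{E}\|A\mathbf{x}+B\mathbf{y}-\boldsymbol{\theta}\|_2^2,$$ and $R_N(\Theta(\boldsymbol{\tau}),\Delta(\boldsymbol{\zeta}),D)$ the same with the infimum over all measurable estimators $\hat{\boldsymbol{\theta}}(\mathbf{x},\mathbf{y})\in\mathbb{R}^d$. For scalars $\tau,\zeta\ge0$, $s\in\mathbb{R}$, let $R_L(\tau,\zeta,s)$ and $R_N(\tau,\zeta,s)$ be the analogous one-dimensional quantities for estimating $\theta\in\mathbb{R}$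 with $|\theta|\le\tau$, $|\delta|\le\zeta$ from independent $u\sim\mathcal{N}(s\theta+\delta,1)$, $v\sim\mathcal{N}(\theta,1)$ (linear estimators $au+bv$, resp. all measurable estimators). Then (a) $R_L(\Theta(\boldsymbol{\tau}),\Delta(\boldsymbol{\zeta}),D)=\sum_{i=1}^dR_L(\tau_i,\zeta_i,D_{ii})$, and if $\mathbf{x},\mathbf{y}\mapsto A\mathbf{x}+B\mathbf{y}$ is a minimax linear estimator for this problem then $A$ and $B$ must be diagonal; (b) $R_N(\Theta(\boldsymbol{\tau}),\Delta(\boldsymbol{\zeta}),D)=\sum_{i=1}^dR_N(\tau_i,\zeta_i,D_{ii})$. *)

theory Defs
  imports "HOL-Probability.Probability"
begin

definition gauss1 :: "real \<Rightarrow> real measure" where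
  "gauss1 mu = density lborel (normal_density mu 1)"

definition gaussv :: "real ^ 'd \<Rightarrow> (real ^ 'd) measure" where
  "gaussv mu = density lborel (\<lambda>x. \<Prod>i\<in>UNIV. normal_density (mu $ i) 1 (x $ i))"

definition diag_mat :: "real ^ 'd ^ 'd \<Rightarrow> bool" where
  "diag_mat M \<longleftrightarrow> (\<forall>i j. i \<noteq> j \<longrightarrow> M $ i $ j = 0)"

definition hrect :: "real ^ 'd \<Rightarrow> (real ^ 'd) set" where
  "hrect t = {v. \<forall>i. \<bar>v $ i\<bar> \<le> t $ i}"

section \<open>Risks (as nonnegative extended reals, so every estimator has a well-defined risk)\<close>

definition riskv :: "real ^ 'd ^ 'd \<Rightarrow> real ^ 'd \<Rightarrow> real ^ 'd
    \<Rightarrow> (real ^ 'd \<Rightarrow> real ^ 'd \<Rightarrow> real ^ 'd) \<Rightarrow> ennreal" where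
  "riskv D th de est =
     (\<integral>\<^sup>+ z. ennreal ((norm (est (fst z) (snd z) - th))\<^sup>2)
        \<partial>(gaussv (D *v th + de) \<Otimes>\<^sub>M gaussv th))"

definition worst_riskv :: "real ^ 'd \<Rightarrow> real ^ 'd \<Rightarrow> real ^ 'd ^ 'd
    \<Rightarrow> (real ^ 'd \<Rightarrow> real ^ 'd \<Rightarrow> real ^ 'd) \<Rightarrow> ennreal" where
  "worst_riskv tau zeta D est = (SUP th\<in>hrect tau. SUP de\<in>hrect zeta. riskv D th de est)"

definition RL_vec :: "real ^ 'd \<Rightarrow> real ^ 'd \<Rightarrow> real ^ 'd ^ 'd \<Rightarrow> ennreal" where
  "RL_vec tau zeta D =
     (INF A\<in>UNIV. INF B\<in>UNIV. worst_riskv tau zeta D (\<lambda>x y. A *v x + B *v y))"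

definition RN_vec :: "real ^ 'd \<Rightarrow> real ^ 'd \<Rightarrow> real ^ 'd ^ 'd \<Rightarrow> ennreal" where
  "RN_vec tau zeta D =
     (INF est\<in>{est :: real ^ 'd \<Rightarrow> real ^ 'd \<Rightarrow> real ^ 'd.
                 (\<lambda>z. est (fst z) (snd z)) \<in> borel_measurable (borel \<Otimes>\<^sub>M borel)}.
        worst_riskv tau zeta D est)"

definition minimax_linear :: "real ^ 'd \<Rightarrow> real ^ 'd \<Rightarrow> real ^ 'd ^ 'd
    \<Rightarrow> real ^ 'd ^ 'd \<Rightarrow> real ^ 'd ^ 'd \<Rightarrow> bool" where
  "minimax_linear tau zeta D A B \<longleftrightarrow>
     worst_riskv tau zeta D (\<lambda>x y. A *v x + B *v y) = RL_vec tau zeta D"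

definition risk1 :: "real \<Rightarrow> real \<Rightarrow> real \<Rightarrow> (real \<Rightarrow> real \<Rightarrow> real) \<Rightarrow> ennreal" where
  "risk1 s th de est =
     (\<integral>\<^sup>+ z. ennreal ((est (fst z) (snd z) - th)\<^sup>2) \<partial>(gauss1 (s * th + de) \<Otimes>\<^sub>M gauss1 th))"

definition worst_risk1 :: "real \<Rightarrow> real \<Rightarrow> real \<Rightarrow> (real \<Rightarrow> real \<Rightarrow> real) \<Rightarrow> ennreal" where
  "worst_risk1 tau zeta s est = (SUP th\<in>{-tau..tau}. SUP de\<in>{-zeta..zeta}. risk1 s th de est)"

definition RL1 :: "real \<Rightarrow> real \<Rightarrow> real \<Rightarrow> ennreal" where
  "RL1 tau zeta s = (INF a\<in>UNIV. INF b\<in>UNIV. worst_risk1 tau zeta s (\<lambda>u v. a * u + b * v))"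

definition RN1 :: "real \<Rightarrow> real \<Rightarrow> real \<Rightarrow> ennreal" where
  "RN1 tau zeta s =
     (INF est\<in>{est :: real \<Rightarrow> real \<Rightarrow> real.
                 (\<lambda>z. est (fst z) (snd z)) \<in> borel_measurable (borel \<Otimes>\<^sub>M borel)}.
        worst_risk1 tau zeta s est)"

end

theory Submission
  imports Defs
begin

text \<open>With \<open>D\<close> diagonal, coordinate \<open>i\<close> of the observations depends only on \<open>(\<theta>$i, \<delta>$i)\<close>, and
  the squared error is the sum of the coordinate errors. Hence separable estimators, built from
  nearly minimax scalar ones, give both upper bounds.

  For linear estimators, averaging the risk over independent random sign flips of a vertex of the
  hyperrectangles bounds the worst-case risk of \<open>(A, B)\<close> below by the sum of squares of all
  entries of \<open>A\<close> and \<open>B\<close> plus the worst-case squared biases of their diagonal parts. The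
  diagonal entries and these biases alone already dominate the sum of the scalar linear minimax
  risks, so the off-diagonal entries of a minimax pair must vanish.

  For arbitrary estimators, the scalar risks of bounded estimators are equicontinuous in the
  parameters, so a finite minimax theorem on a finite net yields, for every coordinate, a finitely
  supported prior whose Bayes risk is within \<open>\<epsilon>\<close> of the scalar minimax risk. Under the product of
  these priors the other coordinates act on coordinate \<open>i\<close> only as independent randomization, so
  every vector estimator has Bayes risk at least the sum of the scalar minimax risks up to \<open>\<epsilon>\<close>.\<close>

section \<open>Gaussian measures\<close>

lemma sets_gauss1 [simp, measurable_cong]: "sets (gauss1 m) = sets borel"
  by (simp add: gauss1_def)

lemma space_gauss1 [simp]: "space (gauss1 m) = UNIV"
  by (simp add: gauss1_def)

lemma prob_space_gauss1 [simp, intro]: "prob_space (gauss1 m)"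
  unfolding gauss1_def by (rule prob_space_normal_density) simp

lemma prob_space_pair_gauss1 [simp, intro]: "prob_space (gauss1 a \<Otimes>\<^sub>M gauss1 b)"
  by (intro prob_space_pair) auto

lemma sets_gaussv [simp, measurable_cong]: "sets (gaussv m) = sets borel"
  by (simp add: gaussv_def)

lemma space_gaussv [simp]: "space (gaussv m) = UNIV"
  by (simp add: gaussv_def)

lemma nn_integral_gauss1_affine_sq:
  "(\<integral>\<^sup>+x. ennreal ((c * x + t)\<^sup>2) \<partial>gauss1 m) = ennreal (c\<^sup>2 + (c * m + t)\<^sup>2)"
proof -
  let ?n = "normal_density m 1"
  have "has_bochner_integral lborel
      (\<lambda>x. c\<^sup>2 * (?n x * (x - m) ^ (2 * 1)) + 2 * c * (c * m + t) * (?n x * (x - m) ^ (2 * 0 + 1))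
            + (c * m + t)\<^sup>2 * ?n x)
      (c\<^sup>2 * 1 + 2 * c * (c * m + t) * 0 + (c * m + t)\<^sup>2 * 1)"
    using normal_moment_even[where \<mu> = m and \<sigma> = 1 and k = 1]
      normal_moment_odd[where \<mu> = m and \<sigma> = 1 and k = 0]
    by (intro has_bochner_integral_add has_bochner_integral_mult_right)
       (auto simp: has_bochner_integral_iff)
  then have "has_bochner_integral lborel (\<lambda>x. ?n x * (c * x + t)\<^sup>2) (c\<^sup>2 + (c * m + t)\<^sup>2)"
    by (rule has_bochner_integral_cong[THEN iffD1, rotated 3]) (auto simp: power2_eq_square algebra_simps)
  then have "(\<integral>\<^sup>+x. ennreal (?n x * (c * x + t)\<^sup>2) \<partial>lborel) = ennreal (c\<^sup>2 + (c * m + t)\<^sup>2)"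
    by (subst nn_integral_eq_integral) (auto simp: has_bochner_integral_iff)
  then show ?thesis
    unfolding gauss1_def by (subst nn_integral_density) (auto simp: ennreal_mult)
qed

lemma nn_integral_pair_gauss1_affine_sq:
  "(\<integral>\<^sup>+z. ennreal ((a * fst z + b * snd z + t)\<^sup>2) \<partial>(gauss1 m \<Otimes>\<^sub>M gauss1 n))
     = ennreal (a\<^sup>2 + b\<^sup>2 + (a * m + b * n + t)\<^sup>2)"
proof -
  interpret N: prob_space "gauss1 n" by simp
  interpret M: prob_space "gauss1 m" by simp
  have inner: "(\<integral>\<^sup>+y. ennreal ((a * x + b * y + t)\<^sup>2) \<partial>gauss1 n)
      = ennreal (b\<^sup>2) + ennreal ((a * x + (b * n + t))\<^sup>2)" for x
    using nn_integral_gauss1_affine_sq[where c = b and t = "a * x + t" and m = n]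
    by (simp add: ennreal_plus[symmetric] algebra_simps del: ennreal_plus)
  have "(\<integral>\<^sup>+z. ennreal ((a * fst z + b * snd z + t)\<^sup>2) \<partial>(gauss1 m \<Otimes>\<^sub>M gauss1 n))
      = (\<integral>\<^sup>+x. ennreal (b\<^sup>2) + ennreal ((a * x + (b * n + t))\<^sup>2) \<partial>gauss1 m)"
    by (subst N.nn_integral_fst[symmetric]) (auto simp: inner)
  also have "\<dots> = ennreal (b\<^sup>2) + ennreal (a\<^sup>2 + (a * m + (b * n + t))\<^sup>2)"
    by (subst nn_integral_add) (auto simp: nn_integral_gauss1_affine_sq M.emeasure_space_1[simplified])
  also have "\<dots> = ennreal (a\<^sup>2 + b\<^sup>2 + (a * m + b * n + t)\<^sup>2)"
    by (simp add: ennreal_plus[symmetric] algebra_simps del: ennreal_plus)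
  finally show ?thesis .
qed

lemma measure_eqI_box:
  fixes M N :: "'a::euclidean_space measure"
  assumes "sets M = sets borel" "sets N = sets borel" "finite_measure M"
    and "\<And>l u. emeasure M (box l u) = emeasure N (box l u)"
  shows "M = N"
proof (rule measure_eqI_generator_eq[where E = "range (\<lambda>(a, b). box a b)" and \<Omega> = UNIV
      and A = "\<lambda>n::nat. box (- (real n *\<^sub>R One)) (real n *\<^sub>R One)"])
  show "Int_stable (range (\<lambda>(a, b). box a b :: 'a set))"
    by (auto simp: Int_stable_def box_Int_box)
  show "sets M = sigma_sets UNIV (range (\<lambda>(a, b). box a b))"
    and "sets N = sigma_sets UNIV (range (\<lambda>(a, b). box a b))"
    using assms(1,2) by (simp_all add: borel_eq_box)
  show "(\<Union>n::nat. box (- (real n *\<^sub>R One)) (real n *\<^sub>R One)) = (UNIV :: 'a set)"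
    by (rule UN_box_eq_UNIV)
  show "emeasure M (box (- (real n *\<^sub>R One)) (real n *\<^sub>R One)) \<noteq> \<infinity>" for n
    using finite_measure.emeasure_finite[OF assms(3)] by (simp add: top_unique)
qed (use assms(4) in auto)

lemma Basis_real_vec: "(Basis :: (real ^ 'd) set) = range (\<lambda>i. axis i 1)"
  by (auto simp: Basis_vec_def)

lemma borel_measurable_vec_lambda:
  fixes f :: "'x \<Rightarrow> 'd::finite \<Rightarrow> real"
  assumes "\<And>i. (\<lambda>x. f x i) \<in> borel_measurable M"
  shows "(\<lambda>x. vec_lambda (f x)) \<in> borel_measurable M"
  by (subst borel_measurable_euclidean_space) (auto simp: Basis_real_vec inner_axis assms)

lemma borel_measurable_vec_nth_comp:
  fixes f :: "'x \<Rightarrow> real ^ 'd"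
  assumes "f \<in> borel_measurable M"
  shows "(\<lambda>x. f x $ i) \<in> borel_measurable M"
  using assms unfolding borel_measurable_euclidean_space[where f = f]
  by (auto simp: Basis_real_vec inner_axis)

lemma borel_measurable_vec_nth [measurable]: "(\<lambda>x::real ^ 'd. x $ i) \<in> borel_measurable borel"
  by (rule borel_measurable_vec_nth_comp) simp

lemma emeasure_gaussv_box:
  fixes m l u :: "real ^ 'd"
  shows "emeasure (gaussv m) (box l u) = (\<Prod>i\<in>UNIV. emeasure (gauss1 (m $ i)) {l $ i<..<u $ i})"
proof -
  define f where "f b t = ennreal (normal_density (m \<bullet> b) 1 t) * indicator {l \<bullet> b<..<u \<bullet> b} t"
    for b :: "real ^ 'd" and t :: real
  have prod_Basis: "(\<Prod>b\<in>Basis. g b) = (\<Prod>i\<in>UNIV. g (axis i 1))" for g :: "real ^ 'd \<Rightarrow> ennreal"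
    unfolding Basis_real_vec by (subst prod.reindex) (auto simp: inj_on_def axis_eq_axis)
  have density_box: "ennreal (\<Prod>i\<in>UNIV. normal_density (m $ i) 1 (x $ i)) * indicator (box l u) x
      = (\<Prod>b\<in>Basis. f b (x \<bullet> b))" for x
  proof (cases "x \<in> box l u")
    case True
    then show ?thesis by (simp add: prod_Basis f_def inner_axis mem_box_cart prod_ennreal)
  next
    case False
    then obtain i where "\<not> (l $ i < x $ i \<and> x $ i < u $ i)" by (auto simp: mem_box_cart)
    then have "f (axis i 1) (x \<bullet> axis i 1) = 0" by (simp add: f_def inner_axis)
    with False show ?thesis by (auto simp: prod_Basis intro!: prod_zero[symmetric])
  qed
  have "emeasure (gaussv m) (box l u) = (\<integral>\<^sup>+x. (\<Prod>b\<in>Basis. f b (x \<bullet> b)) \<partial>lborel)"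
    unfolding gaussv_def by (subst emeasure_density) (auto simp: density_box)
  also have "\<dots> = (\<Prod>b\<in>Basis. (\<integral>\<^sup>+t. f b t \<partial>lborel))"
    by (rule nn_integral_lborel_prod) (auto simp: f_def)
  also have "\<dots> = (\<Prod>i\<in>UNIV. emeasure (gauss1 (m $ i)) {l $ i<..<u $ i})"
    by (simp add: prod_Basis f_def inner_axis gauss1_def emeasure_density)
  finally show ?thesis .
qed

lemma gaussv_eq_distr_PiM:
  fixes m :: "real ^ 'd"
  shows "gaussv m = distr (PiM UNIV (\<lambda>j. gauss1 (m $ j))) borel vec_lambda"
proof -
  let ?P = "PiM UNIV (\<lambda>j. gauss1 (m $ j))"
  interpret P: prob_space ?P by (intro prob_space_PiM) simp
  interpret product_sigma_finite "\<lambda>j. gauss1 (m $ j)"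
    by (simp add: product_sigma_finite_def prob_space_imp_sigma_finite)
  have meas: "vec_lambda \<in> borel_measurable ?P"
    by (rule borel_measurable_vec_lambda) simp
  show ?thesis
  proof (rule measure_eqI_box[symmetric])
    show "finite_measure (distr ?P borel vec_lambda)"
      by (simp add: meas P.finite_measure_distr)
    have "vec_lambda -` box l u \<inter> space ?P = PiE UNIV (\<lambda>i. {l $ i<..<u $ i})" for l u :: "real ^ 'd"
      by (auto simp: space_PiM mem_box_cart PiE_iff)
    then show "emeasure (distr ?P borel vec_lambda) (box l u) = emeasure (gaussv m) (box l u)" for l u
      by (simp add: emeasure_distr meas emeasure_PiM emeasure_gaussv_box)
  qed simp_all
qed

lemma prob_space_gaussv [simp, intro]: "prob_space (gaussv m)"
  unfolding gaussv_eq_distr_PiM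
  by (intro prob_space.prob_space_distr prob_space_PiM borel_measurable_vec_lambda) auto

definition gauss_pairs :: "real ^ 'd \<Rightarrow> real ^ 'd \<Rightarrow> ('d \<Rightarrow> real \<times> real) measure" where
  "gauss_pairs a b = PiM UNIV (\<lambda>j. gauss1 (a $ j) \<Otimes>\<^sub>M gauss1 (b $ j))"

definition unzip_vec :: "('d::finite \<Rightarrow> real \<times> real) \<Rightarrow> (real ^ 'd) \<times> (real ^ 'd)" where
  "unzip_vec \<omega> = (\<chi> j. fst (\<omega> j), \<chi> j. snd (\<omega> j))"

lemma prob_space_gauss_pairs [simp, intro]: "prob_space (gauss_pairs a b)"
  unfolding gauss_pairs_def by (intro prob_space_PiM) auto

lemma measurable_unzip_vec:
  assumes "\<And>j. sets (N j) = sets (borel \<Otimes>\<^sub>M borel)"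
  shows "unzip_vec \<in> measurable (PiM UNIV N) (borel \<Otimes>\<^sub>M borel)"
proof -
  have "sets (PiM UNIV N) = sets (PiM UNIV (\<lambda>_. borel \<Otimes>\<^sub>M borel :: (real \<times> real) measure))"
    by (intro sets_PiM_cong) (simp_all add: assms)
  moreover have "unzip_vec \<in> measurable (PiM UNIV (\<lambda>_. borel \<Otimes>\<^sub>M borel)) (borel \<Otimes>\<^sub>M borel)"
    unfolding unzip_vec_def by (intro measurable_Pair borel_measurable_vec_lambda) simp_all
  ultimately show ?thesis by (simp cong: measurable_cong_sets)
qed

lemma measurable_unzip_vec_gauss_pairs [measurable]:
  "unzip_vec \<in> measurable (gauss_pairs a b) (borel \<Otimes>\<^sub>M borel)"
  unfolding gauss_pairs_def by (rule measurable_unzip_vec) simp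

lemma pair_gaussv_eq_distr_gauss_pairs:
  fixes a b :: "real ^ 'd"
  shows "gaussv a \<Otimes>\<^sub>M gaussv b = distr (gauss_pairs a b) (borel \<Otimes>\<^sub>M borel) unzip_vec"
proof -
  interpret Q: prob_space "gauss_pairs a b" by simp
  interpret product_sigma_finite "\<lambda>j. gauss1 (a $ j) \<Otimes>\<^sub>M gauss1 (b $ j)"
    by (simp add: product_sigma_finite_def prob_space_imp_sigma_finite)
  have meas: "unzip_vec \<in> borel_measurable (gauss_pairs a b)"
    using measurable_unzip_vec_gauss_pairs by (simp add: borel_prod)
  have "gaussv a \<Otimes>\<^sub>M gaussv b = distr (gauss_pairs a b) borel unzip_vec"
  proof (rule measure_eqI_box[symmetric])
    show "sets (gaussv a \<Otimes>\<^sub>M gaussv b) = sets borel"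
      by (simp add: borel_prod[symmetric] cong: sets_pair_measure_cong)
    show "finite_measure (distr (gauss_pairs a b) borel unzip_vec)"
      by (simp add: meas Q.finite_measure_distr)
    fix l u :: "(real ^ 'd) \<times> (real ^ 'd)"
    have "unzip_vec -` box l u \<inter> space (gauss_pairs a b)
        = PiE UNIV (\<lambda>i. {fst l $ i<..<fst u $ i} \<times> {snd l $ i<..<snd u $ i})"
      by (auto simp: gauss_pairs_def unzip_vec_def space_PiM mem_box_cart PiE_iff box_prod
          space_pair_measure mem_Times_iff)
    then have "emeasure (distr (gauss_pairs a b) borel unzip_vec) (box l u)
        = (\<Prod>i\<in>UNIV. emeasure (gauss1 (a $ i)) {fst l $ i<..<fst u $ i}
                       * emeasure (gauss1 (b $ i)) {snd l $ i<..<snd u $ i})"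
      by (simp add: emeasure_distr meas, simp add: gauss_pairs_def emeasure_PiM prob_space_imp_sigma_finite
          sigma_finite_measure.emeasure_pair_measure_Times)
    also have "\<dots> = emeasure (gaussv a \<Otimes>\<^sub>M gaussv b) (box l u)"
      by (simp add: box_prod emeasure_gaussv_box prod.distrib prob_space_imp_sigma_finite
          sigma_finite_measure.emeasure_pair_measure_Times)
    finally show "emeasure (distr (gauss_pairs a b) borel unzip_vec) (box l u)
        = emeasure (gaussv a \<Otimes>\<^sub>M gaussv b) (box l u)" .
  qed simp
  then show ?thesis by (simp add: borel_prod)
qed

lemma nn_integral_PiM_sq_sum:
  fixes f :: "'i \<Rightarrow> 'a \<Rightarrow> real"
  assumes "finite I" "\<And>j. prob_space (M j)"
    and "\<And>j. j \<in> I \<Longrightarrow> f j \<in> borel_measurable (M j)"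
    and "\<And>j t. j \<in> I \<Longrightarrow> (\<integral>\<^sup>+y. ennreal ((f j y + t)\<^sup>2) \<partial>M j) = ennreal (v j + (m j + t)\<^sup>2)"
    and "\<And>j. j \<in> I \<Longrightarrow> v j \<ge> 0"
  shows "(\<integral>\<^sup>+\<omega>. ennreal (((\<Sum>j\<in>I. f j (\<omega> j)) + c)\<^sup>2) \<partial>PiM I M)
       = ennreal ((\<Sum>j\<in>I. v j) + ((\<Sum>j\<in>I. m j) + c)\<^sup>2)"
  using assms(1,3-)
proof (induction I arbitrary: c rule: finite_induct)
  case empty
  then show ?case by (simp add: PiM_empty nn_integral_count_space_finite)
next
  case (insert i I)
  interpret product_sigma_finite M
    by (simp add: product_sigma_finite_def prob_space_imp_sigma_finite assms(2))
  interpret PI: prob_space "PiM I M" by (intro prob_space_PiM assms(2))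
  have meas: "(\<lambda>\<omega>. \<Sum>j\<in>J. f j (\<omega> j)) \<in> borel_measurable (PiM J M)" if "J \<subseteq> insert i I" for J
    using insert.prems(1) that
    by (intro borel_measurable_sum measurable_compose[OF measurable_component_singleton]) auto
  have sum_upd: "(\<Sum>j\<in>insert i I. f j ((x(i := y)) j)) + c = f i y + ((\<Sum>j\<in>I. f j (x j)) + c)"
    for x y
  proof -
    have "(\<Sum>j\<in>I. f j ((x(i := y)) j)) = (\<Sum>j\<in>I. f j (x j))"
      using insert.hyps by (intro sum.cong) auto
    then show ?thesis using insert.hyps by simp
  qed
  have "(\<integral>\<^sup>+\<omega>. ennreal (((\<Sum>j\<in>insert i I. f j (\<omega> j)) + c)\<^sup>2) \<partial>PiM (insert i I) M)
      = (\<integral>\<^sup>+x. \<integral>\<^sup>+y. ennreal (((\<Sum>j\<in>insert i I. f j ((x(i := y)) j)) + c)\<^sup>2) \<partial>M i \<partial>PiM I M)"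
    by (rule product_nn_integral_insert) (use insert meas in auto)
  also have "\<dots> = (\<integral>\<^sup>+x. \<integral>\<^sup>+y. ennreal ((f i y + ((\<Sum>j\<in>I. f j (x j)) + c))\<^sup>2) \<partial>M i \<partial>PiM I M)"
    by (simp only: sum_upd)
  also have "\<dots> = (\<integral>\<^sup>+x. ennreal (v i) + ennreal (((\<Sum>j\<in>I. f j (x j)) + (m i + c))\<^sup>2) \<partial>PiM I M)"
  proof (intro nn_integral_cong)
    fix x
    have "(\<integral>\<^sup>+y. ennreal ((f i y + ((\<Sum>j\<in>I. f j (x j)) + c))\<^sup>2) \<partial>M i)
        = ennreal (v i + (m i + ((\<Sum>j\<in>I. f j (x j)) + c))\<^sup>2)"
      using insert.prems(2)[of i] by simp
    then show "(\<integral>\<^sup>+y. ennreal ((f i y + ((\<Sum>j\<in>I. f j (x j)) + c))\<^sup>2) \<partial>M i)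
        = ennreal (v i) + ennreal (((\<Sum>j\<in>I. f j (x j)) + (m i + c))\<^sup>2)"
      using insert.prems(3)[of i] by (simp add: ennreal_plus[symmetric] algebra_simps del: ennreal_plus)
  qed
  also have "\<dots> = ennreal (v i) + ennreal ((\<Sum>j\<in>I. v j) + ((\<Sum>j\<in>I. m j) + (m i + c))\<^sup>2)"
    using insert meas by (subst nn_integral_add) (auto simp: PI.emeasure_space_1)
  also have "\<dots> = ennreal ((\<Sum>j\<in>insert i I. v j) + ((\<Sum>j\<in>insert i I. m j) + c)\<^sup>2)"
    using insert by (simp add: ennreal_plus[symmetric] sum_nonneg algebra_simps del: ennreal_plus)
  finally show ?case .
qed

section \<open>Coordinatewise decomposition of the vector risk\<close>

lemma diag_mat_mult_vec_nth:
  assumes "diag_mat D"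
  shows "(D *v x) $ i = D $ i $ i * x $ i"
proof -
  have "(D *v x) $ i = (\<Sum>j\<in>UNIV. D $ i $ j * x $ j)"
    by (simp add: matrix_vector_mult_def)
  also have "\<dots> = (\<Sum>j\<in>UNIV. if j = i then D $ i $ i * x $ i else 0)"
    using assms by (intro sum.cong) (auto simp: diag_mat_def)
  finally show ?thesis by simp
qed

lemma power2_norm_vec: "(norm (v :: real ^ 'd))\<^sup>2 = (\<Sum>i\<in>UNIV. (v $ i)\<^sup>2)"
  unfolding power2_norm_eq_inner inner_vec_def by (simp add: power2_eq_square)

lemma borel_measurable_estimator_unzip_vec_nth:
  fixes est :: "real ^ 'd \<Rightarrow> real ^ 'd \<Rightarrow> real ^ 'd" and g :: "'x \<Rightarrow> (real ^ 'd) \<times> (real ^ 'd)"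
  assumes "(\<lambda>z. est (fst z) (snd z)) \<in> borel_measurable (borel \<Otimes>\<^sub>M borel)"
    and "g \<in> measurable M (borel \<Otimes>\<^sub>M borel)"
  shows "(\<lambda>\<omega>. est (fst (g \<omega>)) (snd (g \<omega>)) $ i) \<in> borel_measurable M"
  using borel_measurable_vec_nth_comp[OF measurable_compose[OF assms(2,1)]] by simp

lemma riskv_eq_sum_coords:
  fixes est :: "real ^ 'd \<Rightarrow> real ^ 'd \<Rightarrow> real ^ 'd"
  assumes meas: "(\<lambda>z. est (fst z) (snd z)) \<in> borel_measurable (borel \<Otimes>\<^sub>M borel)"
  shows "riskv D th de est = (\<Sum>i\<in>UNIV. \<integral>\<^sup>+\<omega>.
      ennreal ((est (fst (unzip_vec \<omega>)) (snd (unzip_vec \<omega>)) $ i - th $ i)\<^sup>2) \<partial>gauss_pairs (D *v th + de) th)"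
proof -
  have [measurable]: "(\<lambda>z. est (fst z) (snd z) $ i) \<in> borel_measurable (borel \<Otimes>\<^sub>M borel)" for i
    using borel_measurable_vec_nth_comp[OF meas] .
  have "riskv D th de est = (\<integral>\<^sup>+\<omega>. (\<Sum>i\<in>UNIV.
      ennreal ((est (fst (unzip_vec \<omega>)) (snd (unzip_vec \<omega>)) $ i - th $ i)\<^sup>2)) \<partial>gauss_pairs (D *v th + de) th)"
    unfolding riskv_def pair_gaussv_eq_distr_gauss_pairs
    by (subst nn_integral_distr) (auto simp: meas power2_norm_vec)
  also have "\<dots> = (\<Sum>i\<in>UNIV. \<integral>\<^sup>+\<omega>.
      ennreal ((est (fst (unzip_vec \<omega>)) (snd (unzip_vec \<omega>)) $ i - th $ i)\<^sup>2) \<partial>gauss_pairs (D *v th + de) th)"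
    using borel_measurable_estimator_unzip_vec_nth[OF meas measurable_unzip_vec_gauss_pairs]
    by (intro nn_integral_sum) measurable
  finally show ?thesis .
qed

definition coord_estimator ::
    "(real ^ 'd \<Rightarrow> real ^ 'd \<Rightarrow> real ^ 'd) \<Rightarrow> 'd \<Rightarrow> ('d \<Rightarrow> real \<times> real) \<Rightarrow> real \<Rightarrow> real \<Rightarrow> real" where
  "coord_estimator est i w u v = est (fst (unzip_vec (w(i := (u, v))))) (snd (unzip_vec (w(i := (u, v))))) $ i"

lemma measurable_unzip_vec_fun_upd:
  "(\<lambda>z. unzip_vec (w(i := z))) \<in> measurable (borel \<Otimes>\<^sub>M borel) (borel \<Otimes>\<^sub>M borel)"
proof -
  have "(\<lambda>z::real \<times> real. fst ((w(i := z)) j)) \<in> borel_measurable (borel \<Otimes>\<^sub>M borel)"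
    and "(\<lambda>z::real \<times> real. snd ((w(i := z)) j)) \<in> borel_measurable (borel \<Otimes>\<^sub>M borel)" for j
    by (cases "j = i"; simp)+
  then show ?thesis
    unfolding unzip_vec_def by (intro measurable_Pair borel_measurable_vec_lambda)
qed

lemma borel_measurable_coord_estimator:
  assumes "(\<lambda>z. est (fst z) (snd z)) \<in> borel_measurable (borel \<Otimes>\<^sub>M borel)"
  shows "(\<lambda>z. coord_estimator est i w (fst z) (snd z)) \<in> borel_measurable (borel \<Otimes>\<^sub>M borel)"
  unfolding coord_estimator_def
  using borel_measurable_estimator_unzip_vec_nth[OF assms measurable_unzip_vec_fun_upd] by simp

lemma coord_risk_eq_nn_integral_risk1:
  fixes est :: "real ^ 'd \<Rightarrow> real ^ 'd \<Rightarrow> real ^ 'd"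
  assumes D: "diag_mat D"
    and meas: "(\<lambda>z. est (fst z) (snd z)) \<in> borel_measurable (borel \<Otimes>\<^sub>M borel)"
  shows "(\<integral>\<^sup>+\<omega>. ennreal ((est (fst (unzip_vec \<omega>)) (snd (unzip_vec \<omega>)) $ i - th $ i)\<^sup>2)
            \<partial>gauss_pairs (D *v th + de) th)
       = (\<integral>\<^sup>+w. risk1 (D $ i $ i) (th $ i) (de $ i) (coord_estimator est i w)
            \<partial>PiM (UNIV - {i}) (\<lambda>j. gauss1 ((D *v th + de) $ j) \<Otimes>\<^sub>M gauss1 (th $ j)))"
proof -
  let ?M = "\<lambda>j. gauss1 ((D *v th + de) $ j) \<Otimes>\<^sub>M gauss1 (th $ j)"
  interpret product_sigma_finite ?M
    by (simp add: product_sigma_finite_def prob_space_imp_sigma_finite)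
  have UNIV_eq: "(UNIV :: 'd set) = insert i (UNIV - {i})" by auto
  have "(\<lambda>\<omega>. ennreal ((est (fst (unzip_vec \<omega>)) (snd (unzip_vec \<omega>)) $ i - th $ i)\<^sup>2))
      \<in> borel_measurable (PiM (insert i (UNIV - {i})) ?M)"
    using borel_measurable_estimator_unzip_vec_nth[OF meas measurable_unzip_vec_gauss_pairs]
    by (simp add: gauss_pairs_def flip: UNIV_eq)
  then show ?thesis
    unfolding gauss_pairs_def
    by (subst UNIV_eq, subst product_nn_integral_insert)
       (simp_all add: risk1_def coord_estimator_def diag_mat_mult_vec_nth[OF D])
qed

lemma borel_measurable_risk1_coord_estimator:
  fixes est :: "real ^ 'd \<Rightarrow> real ^ 'd \<Rightarrow> real ^ 'd"
  assumes meas: "(\<lambda>z. est (fst z) (snd z)) \<in> borel_measurable (borel \<Otimes>\<^sub>M borel)"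
    and sets_N: "\<And>j. sets (N j) = sets (borel \<Otimes>\<^sub>M borel)"
  shows "(\<lambda>w. risk1 s t d (coord_estimator est i w)) \<in> borel_measurable (PiM (UNIV - {i}) N)"
proof -
  let ?B = "borel \<Otimes>\<^sub>M borel :: (real \<times> real) measure"
  let ?G = "gauss1 (s * t + d) \<Otimes>\<^sub>M gauss1 t"
  interpret G: prob_space ?G by simp
  have UNIV_eq: "insert i (UNIV - {i}) = (UNIV :: 'd set)" by auto
  have "(\<lambda>(w, z). w(i := z)) \<in> measurable (PiM (UNIV - {i}) (\<lambda>_. ?B) \<Otimes>\<^sub>M ?B) (PiM UNIV (\<lambda>_. ?B))"
    using measurable_add_dim[of i "UNIV - {i}" "\<lambda>_. ?B"] unfolding UNIV_eq .
  moreover have "sets (PiM (UNIV - {i}) N \<Otimes>\<^sub>M ?G) = sets (PiM (UNIV - {i}) (\<lambda>_. ?B) \<Otimes>\<^sub>M ?B)"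
    by (intro sets_pair_measure_cong sets_PiM_cong) (auto simp: sets_N)
  ultimately have "(\<lambda>(w, z). w(i := z)) \<in> measurable (PiM (UNIV - {i}) N \<Otimes>\<^sub>M ?G) (PiM UNIV (\<lambda>_. ?B))"
    by (simp cong: measurable_cong_sets)
  then have "(\<lambda>x. unzip_vec ((\<lambda>(w, z). w(i := z)) x))
      \<in> measurable (PiM (UNIV - {i}) N \<Otimes>\<^sub>M ?G) (borel \<Otimes>\<^sub>M borel)"
    by (rule measurable_compose) (rule measurable_unzip_vec, simp)
  from borel_measurable_estimator_unzip_vec_nth[OF meas this]
  have "(\<lambda>(w, z). ennreal ((coord_estimator est i w (fst z) (snd z) - t)\<^sup>2))
      \<in> borel_measurable (PiM (UNIV - {i}) N \<Otimes>\<^sub>M ?G)"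
    unfolding coord_estimator_def by (simp add: case_prod_beta')
  then show ?thesis
    unfolding risk1_def by (rule G.borel_measurable_nn_integral)
qed

lemma borel_measurable_separable_estimator:
  fixes e :: "'d::finite \<Rightarrow> real \<Rightarrow> real \<Rightarrow> real"
  assumes "\<And>i. (\<lambda>z. e i (fst z) (snd z)) \<in> borel_measurable (borel \<Otimes>\<^sub>M borel)"
  shows "(\<lambda>z. (\<chi> i. e i (fst z $ i) (snd z $ i)) :: real ^ 'd) \<in> borel_measurable (borel \<Otimes>\<^sub>M borel)"
proof (rule borel_measurable_vec_lambda)
  fix i
  have "(\<lambda>z::(real ^ 'd) \<times> (real ^ 'd). (fst z $ i, snd z $ i)) \<in> measurable (borel \<Otimes>\<^sub>M borel) (borel \<Otimes>\<^sub>M borel)"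
    by measurable
  from measurable_compose[OF this assms]
  show "(\<lambda>z. e i (fst z $ i) (snd z $ i)) \<in> borel_measurable (borel \<Otimes>\<^sub>M borel)" by simp
qed

lemma riskv_separable:
  fixes D :: "real ^ 'd ^ 'd" and e :: "'d \<Rightarrow> real \<Rightarrow> real \<Rightarrow> real"
  assumes D: "diag_mat D"
    and meas: "\<And>i. (\<lambda>z. e i (fst z) (snd z)) \<in> borel_measurable (borel \<Otimes>\<^sub>M borel)"
  shows "riskv D th de (\<lambda>x y. \<chi> i. e i (x $ i) (y $ i)) = (\<Sum>i\<in>UNIV. risk1 (D $ i $ i) (th $ i) (de $ i) (e i))"
proof -
  let ?est = "\<lambda>x y. \<chi> i. e i (x $ i) (y $ i)"
  have meas_est: "(\<lambda>z. ?est (fst z) (snd z)) \<in> borel_measurable (borel \<Otimes>\<^sub>M borel)"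
    using meas by (rule borel_measurable_separable_estimator)
  have "coord_estimator ?est i w = e i" for i w
    by (simp add: coord_estimator_def unzip_vec_def fun_eq_iff)
  moreover have "prob_space (PiM (UNIV - {i}) (\<lambda>j. gauss1 ((D *v th + de) $ j) \<Otimes>\<^sub>M gauss1 (th $ j)))" for i
    by (intro prob_space_PiM) simp
  ultimately show ?thesis
    unfolding riskv_eq_sum_coords[OF meas_est] coord_risk_eq_nn_integral_risk1[OF D meas_est]
    by (simp add: prob_space.emeasure_space_1)
qed

lemma worst_riskv_separable_le:
  fixes D :: "real ^ 'd ^ 'd" and e :: "'d \<Rightarrow> real \<Rightarrow> real \<Rightarrow> real"
  assumes D: "diag_mat D"
    and meas: "\<And>i. (\<lambda>z. e i (fst z) (snd z)) \<in> borel_measurable (borel \<Otimes>\<^sub>M borel)"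
  shows "worst_riskv tau zeta D (\<lambda>x y. \<chi> i. e i (x $ i) (y $ i))
       \<le> (\<Sum>i\<in>UNIV. worst_risk1 (tau $ i) (zeta $ i) (D $ i $ i) (e i))"
  unfolding worst_riskv_def riskv_separable[OF D meas]
proof (intro SUP_least sum_mono)
  fix th de i assume "th \<in> hrect tau" "de \<in> hrect zeta"
  then have "\<bar>th $ i\<bar> \<le> tau $ i" "\<bar>de $ i\<bar> \<le> zeta $ i"
    by (auto simp: hrect_def)
  then have "th $ i \<in> {-tau $ i..tau $ i}" "de $ i \<in> {-zeta $ i..zeta $ i}"
    by (auto simp: abs_le_iff)
  then show "risk1 (D $ i $ i) (th $ i) (de $ i) (e i) \<le> worst_risk1 (tau $ i) (zeta $ i) (D $ i $ i) (e i)"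
    unfolding worst_risk1_def by (intro SUP_upper2[where i = "th $ i"] SUP_upper)
qed

lemma risk1_linear:
  "risk1 s th de (\<lambda>u v. a * u + b * v) = ennreal (a\<^sup>2 + b\<^sup>2 + (a * (s * th + de) + b * th - th)\<^sup>2)"
  unfolding risk1_def
  using nn_integral_pair_gauss1_affine_sq[where t = "- th" and m = "s * th + de" and n = th] by simp

lemma riskv_linear:
  fixes A B D :: "real ^ 'd ^ 'd"
  shows "riskv D th de (\<lambda>x y. A *v x + B *v y)
       = ennreal ((\<Sum>i\<in>UNIV. \<Sum>j\<in>UNIV. (A $ i $ j)\<^sup>2 + (B $ i $ j)\<^sup>2)
                  + (norm (A *v (D *v th + de) + B *v th - th))\<^sup>2)"
proof -
  let ?a = "D *v th + de"
  have meas: "(\<lambda>z. A *v fst z + B *v snd z) \<in> borel_measurable (borel \<Otimes>\<^sub>M borel)"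
    by (intro borel_measurable_add measurable_compose[OF measurable_fst]
        measurable_compose[OF measurable_snd] borel_measurable_continuous_onI
        matrix_vector_mult_linear_continuous_on)
  have coord: "(\<integral>\<^sup>+\<omega>. ennreal (((A *v fst (unzip_vec \<omega>) + B *v snd (unzip_vec \<omega>)) $ i - th $ i)\<^sup>2)
          \<partial>gauss_pairs ?a th)
      = ennreal ((\<Sum>j\<in>UNIV. (A $ i $ j)\<^sup>2 + (B $ i $ j)\<^sup>2) + ((A *v ?a + B *v th - th) $ i)\<^sup>2)" for i
  proof -
    have eq: "((A *v fst (unzip_vec \<omega>) + B *v snd (unzip_vec \<omega>)) $ i - th $ i)
        = (\<Sum>j\<in>UNIV. A $ i $ j * fst (\<omega> j) + B $ i $ j * snd (\<omega> j)) + (- th $ i)" for \<omega>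
      by (simp add: unzip_vec_def matrix_vector_mult_def sum.distrib)
    have "(\<integral>\<^sup>+\<omega>. ennreal (((A *v fst (unzip_vec \<omega>) + B *v snd (unzip_vec \<omega>)) $ i - th $ i)\<^sup>2)
          \<partial>gauss_pairs ?a th)
        = ennreal ((\<Sum>j\<in>UNIV. (A $ i $ j)\<^sup>2 + (B $ i $ j)\<^sup>2)
                   + ((\<Sum>j\<in>UNIV. A $ i $ j * ?a $ j + B $ i $ j * th $ j) - th $ i)\<^sup>2)"
      unfolding eq gauss_pairs_def
      by (subst nn_integral_PiM_sq_sum[where v = "\<lambda>j. (A $ i $ j)\<^sup>2 + (B $ i $ j)\<^sup>2"
            and m = "\<lambda>j. A $ i $ j * ?a $ j + B $ i $ j * th $ j"])
         (auto simp: nn_integral_pair_gauss1_affine_sq)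
    also have "(\<Sum>j\<in>UNIV. A $ i $ j * ?a $ j + B $ i $ j * th $ j) - th $ i = (A *v ?a + B *v th - th) $ i"
      by (simp add: matrix_vector_mult_def sum.distrib)
    finally show ?thesis .
  qed
  show ?thesis
    unfolding riskv_eq_sum_coords[OF meas] coord power2_norm_vec
    by (subst sum_ennreal) (auto intro!: add_nonneg_nonneg sum_nonneg simp: sum.distrib)
qed

lemma INF_Pi_sum_le_sum_INF:
  fixes f :: "'i \<Rightarrow> 'a \<Rightarrow> ennreal"
  assumes "finite I"
  shows "(INF g\<in>Pi I X. \<Sum>i\<in>I. f i (g i)) \<le> (\<Sum>i\<in>I. INF x\<in>X i. f i x)"
proof (cases "I = {}")
  case False
  show ?thesis
  proof (rule ennreal_le_epsilon)
    fix e :: real assume fin: "(\<Sum>i\<in>I. INF x\<in>X i. f i x) < top" and e: "0 < e"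
    define e' where "e' = e / card I"
    have card: "0 < card I" using False assms by (simp add: card_gt_0_iff)
    have e': "0 < e'" "(\<Sum>i\<in>I. ennreal e') = ennreal e"
      using e card by (simp add: e'_def, subst sum_ennreal) (auto simp: e'_def)
    have "\<exists>x\<in>X i. f i x < (INF x\<in>X i. f i x) + ennreal e'" if "i \<in> I" for i
    proof -
      have "(INF x\<in>X i. f i x) \<noteq> top"
        using fin that assms ennreal_sum_less_top[of I "\<lambda>i. INF x\<in>X i. f i x"] by fastforce
      then have "(INF x\<in>X i. f i x) + 0 < (INF x\<in>X i. f i x) + ennreal e'"
        using e' by (subst ennreal_add_left_cancel_less) simp
      then show ?thesis by (simp only: add.right_neutral INF_less_iff)
    qed
    then obtain g where g: "\<And>i. i \<in> I \<Longrightarrow> g i \<in> X i \<and> f i (g i) < (INF x\<in>X i. f i x) + ennreal e'"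
      by metis
    then have "(INF g\<in>Pi I X. \<Sum>i\<in>I. f i (g i)) \<le> (\<Sum>i\<in>I. f i (g i))"
      by (intro INF_lower) auto
    also have "\<dots> \<le> (\<Sum>i\<in>I. (INF x\<in>X i. f i x) + ennreal e')"
      using g by (intro sum_mono less_imp_le) auto
    also have "\<dots> = (\<Sum>i\<in>I. INF x\<in>X i. f i x) + ennreal e"
      by (simp only: sum.distrib e'(2))
    finally show "(INF g\<in>Pi I X. \<Sum>i\<in>I. f i (g i)) \<le> (\<Sum>i\<in>I. INF x\<in>X i. f i x) + ennreal e" .
  qed
qed simp

lemma riskv_le_worst_riskv:
  "th \<in> hrect tau \<Longrightarrow> de \<in> hrect zeta \<Longrightarrow> riskv D th de est \<le> worst_riskv tau zeta D est"
  unfolding worst_riskv_def by (rule SUP_upper2, assumption) (rule SUP_upper)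

lemma nn_integral_riskv_le_worst_riskv:
  assumes "prob_space M" "AE p in M. th p \<in> hrect tau \<and> de p \<in> hrect zeta"
  shows "(\<integral>\<^sup>+p. riskv D (th p) (de p) est \<partial>M) \<le> worst_riskv tau zeta D est"
proof -
  have "(\<integral>\<^sup>+p. riskv D (th p) (de p) est \<partial>M) \<le> (\<integral>\<^sup>+p. worst_riskv tau zeta D est \<partial>M)"
    using assms(2) by (intro nn_integral_mono_AE, elim eventually_mono) (blast intro: riskv_le_worst_riskv)
  then show ?thesis by (simp add: prob_space.emeasure_space_1[OF assms(1)])
qed

section \<open>Linear estimators\<close>

lemma worst_risk1_linear_le:
  assumes "tau \<ge> 0" "zeta \<ge> 0"
  shows "worst_risk1 tau zeta s (\<lambda>u v. a * u + b * v)
       \<le> ennreal (a\<^sup>2 + b\<^sup>2 + (\<bar>a * s + b - 1\<bar> * tau + \<bar>a\<bar> * zeta)\<^sup>2)"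
  unfolding worst_risk1_def
proof (intro SUP_least)
  fix th de assume th: "th \<in> {-tau..tau}" and de: "de \<in> {-zeta..zeta}"
  have "\<bar>a * (s * th + de) + b * th - th\<bar> = \<bar>(a * s + b - 1) * th + a * de\<bar>"
    by (simp add: algebra_simps)
  also have "\<dots> \<le> \<bar>a * s + b - 1\<bar> * \<bar>th\<bar> + \<bar>a\<bar> * \<bar>de\<bar>"
    by (metis abs_mult abs_triangle_ineq)
  also have "\<dots> \<le> \<bar>a * s + b - 1\<bar> * tau + \<bar>a\<bar> * zeta"
    using th de by (intro add_mono mult_left_mono) auto
  finally have "(a * (s * th + de) + b * th - th)\<^sup>2 \<le> (\<bar>a * s + b - 1\<bar> * tau + \<bar>a\<bar> * zeta)\<^sup>2"
    by (metis abs_ge_zero abs_le_square_iff power2_abs abs_of_nonneg order_trans)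
  then show "risk1 s th de (\<lambda>u v. a * u + b * v)
      \<le> ennreal (a\<^sup>2 + b\<^sup>2 + (\<bar>a * s + b - 1\<bar> * tau + \<bar>a\<bar> * zeta)\<^sup>2)"
    unfolding risk1_linear by (intro ennreal_leI) simp
qed

lemma nn_integral_random_signs_sq:
  assumes "finite I"
  shows "(\<integral>\<^sup>+\<epsilon>. ennreal ((\<Sum>j\<in>I. (if \<epsilon> j then 1 else -1) * w j)\<^sup>2) \<partial>PiM I (\<lambda>_. bernoulli_pmf (1/2)))
       = ennreal (\<Sum>j\<in>I. (w j)\<^sup>2)"
proof -
  have "(\<integral>\<^sup>+b. ennreal (((if b then 1 else -1) * w j + t)\<^sup>2) \<partial>bernoulli_pmf (1/2))
      = ennreal ((w j)\<^sup>2 + (0 + t)\<^sup>2)" for j t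
  proof -
    have "(\<integral>\<^sup>+b. ennreal (((if b then 1 else -1) * w j + t)\<^sup>2) \<partial>bernoulli_pmf (1/2))
        = ennreal ((w j + t)\<^sup>2) * ennreal (1/2) + ennreal ((- w j + t)\<^sup>2) * ennreal (1/2)"
      by simp
    also have "\<dots> = ennreal ((w j + t)\<^sup>2 * (1/2) + (- w j + t)\<^sup>2 * (1/2))"
      by (simp only: ennreal_mult[symmetric, of "(w j + t)\<^sup>2" "1/2"] zero_le_power2
          ennreal_mult[symmetric, of "(- w j + t)\<^sup>2" "1/2"] ennreal_plus[symmetric] mult_nonneg_nonneg)
    also have "(w j + t)\<^sup>2 * (1/2) + (- w j + t)\<^sup>2 * (1/2) = (w j)\<^sup>2 + (0 + t)\<^sup>2"
      by (simp add: power2_eq_square algebra_simps)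
    finally show ?thesis .
  qed
  then show ?thesis
    using nn_integral_PiM_sq_sum[where M = "\<lambda>_. measure_pmf (bernoulli_pmf (1/2))"
        and f = "\<lambda>j b. (if b then 1 else -1) * w j" and v = "\<lambda>j. (w j)\<^sup>2" and m = "\<lambda>_. 0" and c = 0]
    by (simp add: assms prob_space_measure_pmf)
qed

text \<open>Averaging over independent random sign flips of the coordinates of a point \<open>(t, d)\<close> of the
  hyperrectangles: the cross terms of the bias cancel, leaving the sum of squares of all of its
  coefficients.\<close>

lemma worst_riskv_linear_ge_sign_average:
  fixes A B D :: "real ^ 'd ^ 'd" and tau zeta t d :: "real ^ 'd"
  assumes D: "diag_mat D" and t: "\<forall>j. \<bar>t $ j\<bar> \<le> tau $ j" and d: "\<forall>j. \<bar>d $ j\<bar> \<le> zeta $ j"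
  shows "ennreal ((\<Sum>i\<in>UNIV. \<Sum>j\<in>UNIV. (A $ i $ j)\<^sup>2 + (B $ i $ j)\<^sup>2)
            + (\<Sum>i\<in>UNIV. \<Sum>j\<in>UNIV. ((A $ i $ j * D $ j $ j + B $ i $ j - (if j = i then 1 else 0)) * t $ j
                                      + A $ i $ j * d $ j)\<^sup>2))
       \<le> worst_riskv tau zeta D (\<lambda>x y. A *v x + B *v y)"
proof -
  define W where "W i j = (A $ i $ j * D $ j $ j + B $ i $ j - (if j = i then 1 else 0)) * t $ j
      + A $ i $ j * d $ j" for i j
  define sg :: "bool \<Rightarrow> real" where "sg b = (if b then 1 else -1)" for b
  define th where "th \<epsilon> = (\<chi> j. sg (\<epsilon> j) * t $ j)" for \<epsilon> :: "'d \<Rightarrow> bool"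
  define de where "de \<epsilon> = (\<chi> j. sg (\<epsilon> j) * d $ j)" for \<epsilon> :: "'d \<Rightarrow> bool"
  define S where "S = (\<Sum>i\<in>UNIV. \<Sum>j\<in>UNIV. (A $ i $ j)\<^sup>2 + (B $ i $ j)\<^sup>2)"
  define E where "E = PiM (UNIV :: 'd set) (\<lambda>_. measure_pmf (bernoulli_pmf (1/2)))"
  let ?L = "\<lambda>x y. A *v x + B *v y"
  interpret E: prob_space E unfolding E_def by (intro prob_space_PiM prob_space_measure_pmf)
  have vertex: "th \<epsilon> \<in> hrect tau \<and> de \<epsilon> \<in> hrect zeta" for \<epsilon>
    using t d by (simp add: hrect_def th_def de_def sg_def abs_mult)
  have bias: "(A *v (D *v th \<epsilon> + de \<epsilon>) + B *v th \<epsilon> - th \<epsilon>) $ i = (\<Sum>j\<in>UNIV. sg (\<epsilon> j) * W i j)" for \<epsilon> i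
  proof -
    have expand: "(A *v v + B *v u - u) $ i
        = (\<Sum>j\<in>UNIV. A $ i $ j * v $ j + B $ i $ j * u $ j - (if j = i then u $ j else 0))" for v u
      by (simp add: matrix_vector_mult_def sum.distrib sum_subtractf)
    show ?thesis
      unfolding expand
      by (intro sum.cong) (simp_all add: diag_mat_mult_vec_nth[OF D] W_def th_def de_def algebra_simps)
  qed
  have meas: "(\<lambda>\<epsilon>. ennreal ((\<Sum>j\<in>UNIV. sg (\<epsilon> j) * W i j)\<^sup>2)) \<in> borel_measurable E" for i
  proof -
    have "(\<lambda>\<epsilon>. \<Sum>j\<in>UNIV. sg (\<epsilon> j) * W i j) \<in> borel_measurable E"
      unfolding E_def by (intro borel_measurable_sum measurable_compose[OF measurable_component_singleton]) auto
    then show ?thesis by measurable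
  qed
  have "(\<integral>\<^sup>+\<epsilon>. riskv D (th \<epsilon>) (de \<epsilon>) ?L \<partial>E)
      = (\<integral>\<^sup>+\<epsilon>. ennreal S + (\<Sum>i\<in>UNIV. ennreal ((\<Sum>j\<in>UNIV. sg (\<epsilon> j) * W i j)\<^sup>2)) \<partial>E)"
    unfolding riskv_linear power2_norm_vec bias
    by (simp add: S_def ennreal_plus[symmetric] sum_nonneg del: ennreal_plus)
  also have "\<dots> = (\<integral>\<^sup>+\<epsilon>. ennreal S \<partial>E)
      + (\<Sum>i\<in>UNIV. \<integral>\<^sup>+\<epsilon>. ennreal ((\<Sum>j\<in>UNIV. sg (\<epsilon> j) * W i j)\<^sup>2) \<partial>E)"
  proof -
    have "(\<lambda>\<epsilon>. \<Sum>i\<in>UNIV. ennreal ((\<Sum>j\<in>UNIV. sg (\<epsilon> j) * W i j)\<^sup>2)) \<in> borel_measurable E"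
      using meas by (rule borel_measurable_sum)
    then show ?thesis
      using meas by (simp only: nn_integral_add nn_integral_sum borel_measurable_const finite)
  qed
  also have "\<dots> = ennreal (S + (\<Sum>i\<in>UNIV. \<Sum>j\<in>UNIV. (W i j)\<^sup>2))"
    using nn_integral_random_signs_sq[of UNIV "W i" for i]
    by (simp add: E.emeasure_space_1[simplified E_def] E_def sg_def S_def sum_nonneg
        ennreal_plus[symmetric] del: ennreal_plus)
  finally show ?thesis
    using nn_integral_riskv_le_worst_riskv[OF E.prob_space_axioms, of th tau de zeta D ?L] vertex
    by (simp add: S_def W_def)
qed

lemma worst_riskv_linear_ge:
  fixes A B D :: "real ^ 'd ^ 'd" and tau zeta :: "real ^ 'd"
  assumes D: "diag_mat D" and tau: "\<forall>i. tau $ i \<ge> 0" and zeta: "\<forall>i. zeta $ i \<ge> 0"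
  shows "ennreal ((\<Sum>i\<in>UNIV. \<Sum>j\<in>UNIV. (A $ i $ j)\<^sup>2 + (B $ i $ j)\<^sup>2)
            + (\<Sum>i\<in>UNIV. (\<bar>A $ i $ i * D $ i $ i + B $ i $ i - 1\<bar> * tau $ i + \<bar>A $ i $ i\<bar> * zeta $ i)\<^sup>2))
       \<le> worst_riskv tau zeta D (\<lambda>x y. A *v x + B *v y)"
proof -
  define t where "t = (\<chi> j. sgn (A $ j $ j * D $ j $ j + B $ j $ j - 1) * tau $ j)"
  define d where "d = (\<chi> j. sgn (A $ j $ j) * zeta $ j)"
  define W where "W i j = (A $ i $ j * D $ j $ j + B $ i $ j - (if j = i then 1 else 0)) * t $ j
      + A $ i $ j * d $ j" for i j
  have "\<forall>j. \<bar>t $ j\<bar> \<le> tau $ j" "\<forall>j. \<bar>d $ j\<bar> \<le> zeta $ j"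
    using tau zeta by (auto simp: t_def d_def abs_mult sgn_if)
  note sign_average = worst_riskv_linear_ge_sign_average[OF D this, where A = A and B = B]
  have "(\<bar>A $ i $ i * D $ i $ i + B $ i $ i - 1\<bar> * tau $ i + \<bar>A $ i $ i\<bar> * zeta $ i)\<^sup>2
      \<le> (\<Sum>j\<in>UNIV. (W i j)\<^sup>2)" for i
  proof -
    have "\<bar>A $ i $ i * D $ i $ i + B $ i $ i - 1\<bar> * tau $ i + \<bar>A $ i $ i\<bar> * zeta $ i = W i i"
      by (simp add: W_def t_def d_def abs_sgn)
    moreover have "(W i i)\<^sup>2 \<le> (\<Sum>j\<in>UNIV. (W i j)\<^sup>2)"
      by (rule member_le_sum) auto
    ultimately show ?thesis by simp
  qed
  then have "(\<Sum>i\<in>UNIV. (\<bar>A $ i $ i * D $ i $ i + B $ i $ i - 1\<bar> * tau $ i + \<bar>A $ i $ i\<bar> * zeta $ i)\<^sup>2)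
      \<le> (\<Sum>i\<in>UNIV. \<Sum>j\<in>UNIV. (W i j)\<^sup>2)"
    by (rule sum_mono)
  then show ?thesis
    using sign_average unfolding W_def by (meson add_left_mono ennreal_leI order_trans)
qed

lemma RL1_le_worst_risk1_linear: "RL1 tau zeta s \<le> worst_risk1 tau zeta s (\<lambda>u v. a * u + b * v)"
  unfolding RL1_def by (rule INF_lower2[of a]) (auto intro: INF_lower)

lemma sum_RL1_le_diagonal_risk:
  fixes A B D :: "real ^ 'd ^ 'd" and tau zeta :: "real ^ 'd"
  assumes "\<forall>i. tau $ i \<ge> 0" "\<forall>i. zeta $ i \<ge> 0"
  shows "(\<Sum>i\<in>UNIV. RL1 (tau $ i) (zeta $ i) (D $ i $ i))
       \<le> ennreal ((\<Sum>i\<in>UNIV. (A $ i $ i)\<^sup>2 + (B $ i $ i)\<^sup>2)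
            + (\<Sum>i\<in>UNIV. (\<bar>A $ i $ i * D $ i $ i + B $ i $ i - 1\<bar> * tau $ i + \<bar>A $ i $ i\<bar> * zeta $ i)\<^sup>2))"
proof -
  have "(\<Sum>i\<in>UNIV. RL1 (tau $ i) (zeta $ i) (D $ i $ i))
      \<le> (\<Sum>i\<in>UNIV. ennreal ((A $ i $ i)\<^sup>2 + (B $ i $ i)\<^sup>2
            + (\<bar>A $ i $ i * D $ i $ i + B $ i $ i - 1\<bar> * tau $ i + \<bar>A $ i $ i\<bar> * zeta $ i)\<^sup>2))"
    using assms by (intro sum_mono order_trans[OF RL1_le_worst_risk1_linear worst_risk1_linear_le]) auto
  then show ?thesis
    by (subst (asm) sum_ennreal) (auto simp: sum.distrib)
qed

lemma off_diagonal_eq_0_if_sum_le_trace: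
  fixes T :: "'d::finite \<Rightarrow> 'd \<Rightarrow> real"
  assumes nonneg: "\<And>i j. T i j \<ge> 0" and le: "(\<Sum>i\<in>UNIV. \<Sum>j\<in>UNIV. T i j) \<le> (\<Sum>i\<in>UNIV. T i i)"
    and "i \<noteq> j"
  shows "T i j = 0"
proof -
  have "(\<Sum>j\<in>UNIV. T k j) = T k k + (\<Sum>j\<in>UNIV - {k}. T k j)" for k
    by (rule sum.remove) auto
  then have "(\<Sum>i\<in>UNIV. \<Sum>j\<in>UNIV. T i j) = (\<Sum>i\<in>UNIV. T i i) + (\<Sum>i\<in>UNIV. \<Sum>j\<in>UNIV - {i}. T i j)"
    by (simp add: sum.distrib)
  with le have "(\<Sum>i\<in>UNIV. \<Sum>j\<in>UNIV - {i}. T i j) \<le> 0" by simp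
  moreover have "T i j \<le> (\<Sum>j\<in>UNIV - {i}. T i j)"
    using \<open>i \<noteq> j\<close> by (intro member_le_sum) (auto intro: nonneg)
  moreover have "(\<Sum>j\<in>UNIV - {i}. T i j) \<le> (\<Sum>i\<in>UNIV. \<Sum>j\<in>UNIV - {i}. T i j)"
    by (intro member_le_sum) (auto intro: sum_nonneg nonneg)
  ultimately show ?thesis using nonneg[of i j] by linarith
qed

lemma RL_vec_le_sum_RL1:
  fixes D :: "real ^ 'd ^ 'd" and tau zeta :: "real ^ 'd"
  assumes D: "diag_mat D"
  shows "RL_vec tau zeta D \<le> (\<Sum>i\<in>UNIV. RL1 (tau $ i) (zeta $ i) (D $ i $ i))"
proof -
  define diag :: "('d \<Rightarrow> real) \<Rightarrow> real ^ 'd ^ 'd" where "diag a = (\<chi> i j. if i = j then a i else 0)" for a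
  let ?lin = "\<lambda>p :: real \<times> real. \<lambda>u v. fst p * u + snd p * v"
  have "(diag a *v x) $ i = a i * x $ i" for a x i
  proof -
    have "(diag a *v x) $ i = (\<Sum>j\<in>UNIV. (if i = j then a i else 0) * x $ j)"
      by (simp add: diag_def matrix_vector_mult_def)
    also have "\<dots> = (\<Sum>j\<in>UNIV. if j = i then a i * x $ i else 0)"
      by (rule sum.cong) auto
    finally show ?thesis by simp
  qed
  then have "(\<lambda>x y. diag (fst \<circ> g) *v x + diag (snd \<circ> g) *v y) = (\<lambda>x y. \<chi> i. ?lin (g i) (x $ i) (y $ i))" for g
    by (simp add: fun_eq_iff vec_eq_iff)
  moreover have "RL_vec tau zeta D
      \<le> worst_riskv tau zeta D (\<lambda>x y. diag (fst \<circ> g) *v x + diag (snd \<circ> g) *v y)" for g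
    unfolding RL_vec_def by (rule INF_lower2[where i = "diag (fst \<circ> g)"], simp, rule INF_lower, simp)
  ultimately have "RL_vec tau zeta D \<le> worst_riskv tau zeta D (\<lambda>x y. \<chi> i. ?lin (g i) (x $ i) (y $ i))" for g
    by simp
  also have "\<dots> g \<le> (\<Sum>i\<in>UNIV. worst_risk1 (tau $ i) (zeta $ i) (D $ i $ i) (?lin (g i)))" for g
    by (rule worst_riskv_separable_le[OF D]) simp
  finally have "RL_vec tau zeta D
      \<le> (INF g\<in>Pi UNIV (\<lambda>_. UNIV). \<Sum>i\<in>UNIV. worst_risk1 (tau $ i) (zeta $ i) (D $ i $ i) (?lin (g i)))"
    by (rule INF_greatest)
  also have "\<dots> \<le> (\<Sum>i\<in>UNIV. INF p\<in>UNIV. worst_risk1 (tau $ i) (zeta $ i) (D $ i $ i) (?lin p))"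
    by (rule INF_Pi_sum_le_sum_INF) simp
  also have "\<dots> = (\<Sum>i\<in>UNIV. RL1 (tau $ i) (zeta $ i) (D $ i $ i))"
    by (simp add: RL1_def INF_Sigma)
  finally show ?thesis .
qed

theorem RL_vec_eq_sum_RL1_and_minimax_linear_diag:
  fixes D :: "real ^ 'd ^ 'd" and tau zeta :: "real ^ 'd"
  assumes D: "diag_mat D" and tau: "\<forall>i. tau $ i \<ge> 0" and zeta: "\<forall>i. zeta $ i \<ge> 0"
  shows "RL_vec tau zeta D = (\<Sum>i\<in>UNIV. RL1 (tau $ i) (zeta $ i) (D $ i $ i))"
    and "minimax_linear tau zeta D A B \<Longrightarrow> diag_mat A \<and> diag_mat B"
proof -
  let ?RL = "\<Sum>i\<in>UNIV. RL1 (tau $ i) (zeta $ i) (D $ i $ i)"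
  let ?T = "\<lambda>A B i j. (A $ i $ j)\<^sup>2 + (B $ i $ j)\<^sup>2 :: real"
  let ?bias = "\<lambda>A B. \<Sum>i\<in>UNIV. (\<bar>A $ i $ i * D $ i $ i + B $ i $ i - 1\<bar> * tau $ i + \<bar>A $ i $ i\<bar> * zeta $ i)\<^sup>2"
  have lower: "?RL \<le> worst_riskv tau zeta D (\<lambda>x y. A *v x + B *v y)" for A B
  proof -
    have "(\<Sum>i\<in>UNIV. ?T A B i i) \<le> (\<Sum>i\<in>UNIV. \<Sum>j\<in>UNIV. ?T A B i j)"
      by (intro sum_mono member_le_sum) auto
    then have "ennreal ((\<Sum>i\<in>UNIV. ?T A B i i) + ?bias A B)
        \<le> ennreal ((\<Sum>i\<in>UNIV. \<Sum>j\<in>UNIV. ?T A B i j) + ?bias A B)"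
      by (intro ennreal_leI) simp
    then show ?thesis
      by (rule order_trans[OF sum_RL1_le_diagonal_risk[OF tau zeta]
          order_trans[OF _ worst_riskv_linear_ge[OF D tau zeta]]])
  qed
  show eq: "RL_vec tau zeta D = ?RL"
  proof (rule antisym)
    show "?RL \<le> RL_vec tau zeta D"
      unfolding RL_vec_def by (intro INF_greatest lower)
  qed (rule RL_vec_le_sum_RL1[OF D])
  assume "minimax_linear tau zeta D A B"
  then have "worst_riskv tau zeta D (\<lambda>x y. A *v x + B *v y) = ?RL"
    by (simp only: minimax_linear_def eq)
  with worst_riskv_linear_ge[OF D tau zeta, where A = A and B = B]
  have "ennreal ((\<Sum>i\<in>UNIV. \<Sum>j\<in>UNIV. ?T A B i j) + ?bias A B)
      \<le> ennreal ((\<Sum>i\<in>UNIV. ?T A B i i) + ?bias A B)"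
    using sum_RL1_le_diagonal_risk[OF tau zeta, where A = A and B = B and D = D] by simp
  then have "(\<Sum>i\<in>UNIV. \<Sum>j\<in>UNIV. ?T A B i j) \<le> (\<Sum>i\<in>UNIV. ?T A B i i)"
    by (simp add: ennreal_le_iff sum_nonneg)
  then have "?T A B i j = 0" if "i \<noteq> j" for i j
    using off_diagonal_eq_0_if_sum_le_trace[of "?T A B", OF _ _ that] by simp
  then show "diag_mat A \<and> diag_mat B"
    unfolding diag_mat_def by (simp add: add_nonneg_eq_0_iff)
qed

section \<open>A finite minimax theorem\<close>

lemma connected_Icc_negative_mixtures:
  fixes x y :: "'e \<Rightarrow> real"
  assumes neg: "\<And>\<beta>. \<beta> \<in> {0..1} \<Longrightarrow> \<exists>e\<in>E. \<beta> * x e + (1 - \<beta>) * y e < 0"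
  obtains \<beta> e1 e2 where "\<beta> \<in> {0..1}" "e1 \<in> E" "e2 \<in> E" "x e1 < 0" "y e2 < 0"
    "\<beta> * x e1 + (1 - \<beta>) * y e1 < 0" "\<beta> * x e2 + (1 - \<beta>) * y e2 < 0"
proof -
  define U where "U z = (\<Union>e\<in>{e\<in>E. z e < 0}. {\<beta>::real. \<beta> * x e + (1 - \<beta>) * y e < 0})"
    for z :: "'e \<Rightarrow> real"
  have open_U: "open (U z)" for z
    unfolding U_def by (intro open_UN ballI open_Collect_less) (auto intro!: continuous_intros)
  have cover: "{0..1} \<subseteq> U x \<union> U y"
  proof
    fix \<beta> :: real assume \<beta>: "\<beta> \<in> {0..1}"
    then obtain e where e: "e \<in> E" "\<beta> * x e + (1 - \<beta>) * y e < 0" using neg by blast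
    have "x e < 0 \<or> y e < 0"
    proof (rule ccontr)
      assume "\<not> (x e < 0 \<or> y e < 0)"
      then have "0 \<le> \<beta> * x e + (1 - \<beta>) * y e"
        using \<beta> by (intro add_nonneg_nonneg mult_nonneg_nonneg) auto
      with e(2) show False by simp
    qed
    with e show "\<beta> \<in> U x \<union> U y" unfolding U_def by auto
  qed
  have ends: "1 \<in> U x" "0 \<in> U y"
    using neg[of 1] neg[of 0] by (auto simp: U_def)
  have "U x \<inter> U y \<inter> {0..1} \<noteq> {}"
  proof
    assume "U x \<inter> U y \<inter> {0..1} = {}"
    from connectedD[OF connected_Icc open_U open_U this cover] ends show False by auto
  qed
  then obtain \<beta> where \<beta>: "\<beta> \<in> {0..1}" "\<beta> \<in> U x" "\<beta> \<in> U y" by blast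
  from \<beta>(2) obtain e1 where "e1 \<in> E" "x e1 < 0" "\<beta> * x e1 + (1 - \<beta>) * y e1 < 0"
    unfolding U_def by blast
  moreover from \<beta>(3) obtain e2 where "e2 \<in> E" "y e2 < 0" "\<beta> * x e2 + (1 - \<beta>) * y e2 < 0"
    unfolding U_def by blast
  ultimately show ?thesis using that \<beta>(1) by blast
qed

text \<open>The induction step of the finite minimax theorem: two pure strategies \<open>a, b\<close> of the
  maximizing player can be merged into the single mixed strategy \<open>\<beta> b + (1 - \<beta>) a\<close>.
  Otherwise, by connectedness of \<open>[0, 1]\<close>, some \<open>\<beta>\<close> admits replies \<open>e1, e2\<close> such that a
  suitable mixture of them, available by convexity, makes every strategy in \<open>insert a S\<close> negative.\<close>

lemma finite_minimax_merge:
  fixes f :: "'s \<Rightarrow> 'e \<Rightarrow> real"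
  assumes conv: "\<And>e1 e2 \<mu>. e1 \<in> E \<Longrightarrow> e2 \<in> E \<Longrightarrow> 0 \<le> \<mu> \<Longrightarrow> \<mu> \<le> 1 \<Longrightarrow>
      \<exists>e\<in>E. \<forall>s\<in>insert a S. f s e \<le> \<mu> * f s e1 + (1 - \<mu>) * f s e2"
    and nonneg: "\<And>e. e \<in> E \<Longrightarrow> \<exists>s\<in>insert a S. 0 \<le> f s e"
    and b: "b \<in> S"
  shows "\<exists>\<beta>\<in>{0..1}. \<forall>e\<in>E. \<exists>s\<in>S. 0 \<le> (if s = b then \<beta> * f b e + (1 - \<beta>) * f a e else f s e)"
proof (rule ccontr)
  assume contra: "\<not> ?thesis"
  have "\<exists>e\<in>{e\<in>E. \<forall>s\<in>S - {b}. f s e < 0}. \<beta> * f b e + (1 - \<beta>) * f a e < 0"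
    if \<beta>: "\<beta> \<in> {0..1}" for \<beta>
  proof -
    obtain e where e: "e \<in> E" "\<forall>s\<in>S. (if s = b then \<beta> * f b e + (1 - \<beta>) * f a e else f s e) < 0"
      using contra \<beta> by (meson not_le)
    have "\<forall>s\<in>S - {b}. f s e < 0"
    proof
      fix s assume "s \<in> S - {b}"
      then show "f s e < 0" using e(2)[rule_format, of s] by simp
    qed
    with e b show ?thesis by force
  qed
  then obtain \<beta> e1 e2 where \<beta>: "\<beta> \<in> {0..1}"
    and e1: "e1 \<in> E" "\<forall>s\<in>S - {b}. f s e1 < 0" "f b e1 < 0" "\<beta> * f b e1 + (1 - \<beta>) * f a e1 < 0"
    and e2: "e2 \<in> E" "\<forall>s\<in>S - {b}. f s e2 < 0" "f a e2 < 0" "\<beta> * f b e2 + (1 - \<beta>) * f a e2 < 0"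
    by (rule connected_Icc_negative_mixtures) auto
  have "0 \<le> f a e1" "0 \<le> f b e2"
    using nonneg[OF e1(1)] nonneg[OF e2(1)] e1(2,3) e2(2,3) by (force simp: not_le)+
  define d1 where "d1 = f b e1 - f a e1"
  define d2 where "d2 = f b e2 - f a e2"
  have "d1 < 0" "0 < d2"
    using e1(3) e2(3) \<open>0 \<le> f a e1\<close> \<open>0 \<le> f b e2\<close> by (simp_all add: d1_def d2_def)
  define \<mu> where "\<mu> = d2 / (d2 - d1)"
  have \<mu>: "0 \<le> \<mu>" "\<mu> \<le> 1" and \<mu>_eq: "\<mu> * d1 + (1 - \<mu>) * d2 = 0"
    using \<open>d1 < 0\<close> \<open>0 < d2\<close> by (auto simp: \<mu>_def divide_simps)
  obtain e where e: "e \<in> E" "\<forall>s\<in>insert a S. f s e \<le> \<mu> * f s e1 + (1 - \<mu>) * f s e2"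
    using conv[OF e1(1) e2(1) \<mu>] by blast
  have mix_neg: "\<mu> * p + (1 - \<mu>) * q < 0" if "p < 0" "q < 0" for p q
  proof (cases "\<mu> = 0")
    case False
    then have "\<mu> * p < 0" using \<mu> that by (simp add: mult_pos_neg)
    moreover have "(1 - \<mu>) * q \<le> 0" using \<mu> that by (simp add: mult_nonneg_nonpos)
    ultimately show ?thesis by linarith
  qed (use that in simp)
  define R where "R s = \<mu> * f s e1 + (1 - \<mu>) * f s e2" for s
  have "R b = R a" using \<mu>_eq by (simp add: R_def d1_def d2_def algebra_simps)
  moreover have "\<beta> * R b + (1 - \<beta>) * R a
      = \<mu> * (\<beta> * f b e1 + (1 - \<beta>) * f a e1) + (1 - \<mu>) * (\<beta> * f b e2 + (1 - \<beta>) * f a e2)"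
    by (simp add: R_def algebra_simps)
  ultimately have "R a < 0" using mix_neg[OF e1(4) e2(4)] by (simp add: algebra_simps)
  have "R s < 0" if "s \<in> insert a S" for s
  proof (cases "s \<in> S - {b}")
    case True
    then show ?thesis using mix_neg e1(2) e2(2) by (simp add: R_def)
  next
    case False
    with that have "s = a \<or> s = b" by blast
    then show ?thesis using \<open>R a < 0\<close> \<open>R b = R a\<close> by auto
  qed
  then have "\<forall>s\<in>insert a S. f s e < 0"
    using e(2) unfolding R_def by fastforce
  with nonneg[OF e(1)] show False by (auto simp: not_le[symmetric])
qed

lemma unmerge_weights:
  fixes w :: "'s \<Rightarrow> real"
  assumes S: "finite S" "a \<notin> S" "b \<in> S" and \<beta>: "0 \<le> \<beta>" "\<beta> \<le> 1"
    and w: "\<forall>s\<in>S. 0 \<le> w s" "sum w S = 1"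
  obtains w' where "\<forall>s\<in>insert a S. 0 \<le> w' s" "sum w' (insert a S) = 1"
    "\<And>h. (\<Sum>s\<in>insert a S. w' s * h s) = (\<Sum>s\<in>S. w s * (if s = b then \<beta> * h b + (1 - \<beta>) * h a else h s))"
proof
  define w' where "w' s = (if s = a then (1 - \<beta>) * w b else if s = b then \<beta> * w b else w s)" for s
  have "a \<noteq> b" using S by auto
  have split_b: "(\<Sum>s\<in>S. h s) = h b + (\<Sum>s\<in>S - {b}. h s)" for h :: "'s \<Rightarrow> real"
    using S by (simp add: sum.remove)
  have rest: "(\<Sum>s\<in>S - {b}. w' s * k s) = (\<Sum>s\<in>S - {b}. w s * k s)" for k :: "'s \<Rightarrow> real"
    using S by (intro sum.cong) (auto simp: w'_def)
  show "\<forall>s\<in>insert a S. 0 \<le> w' s"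
    using w(1) S \<beta> by (auto simp: w'_def)
  show sum_eq: "(\<Sum>s\<in>insert a S. w' s * h s) = (\<Sum>s\<in>S. w s * (if s = b then \<beta> * h b + (1 - \<beta>) * h a else h s))"
    for h
  proof -
    have "(\<Sum>s\<in>insert a S. w' s * h s) = w' a * h a + w' b * h b + (\<Sum>s\<in>S - {b}. w' s * h s)"
      using S by (simp add: split_b[of "\<lambda>s. w' s * h s"])
    also have "\<dots> = w b * (\<beta> * h b + (1 - \<beta>) * h a)
        + (\<Sum>s\<in>S - {b}. w s * (if s = b then \<beta> * h b + (1 - \<beta>) * h a else h s))"
      using \<open>a \<noteq> b\<close> by (simp only: rest) (auto simp: w'_def algebra_simps intro!: sum.cong)
    also have "\<dots> = (\<Sum>s\<in>S. w s * (if s = b then \<beta> * h b + (1 - \<beta>) * h a else h s))"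
      using split_b[of "\<lambda>s. w s * (if s = b then \<beta> * h b + (1 - \<beta>) * h a else h s)"] by simp
    finally show ?thesis .
  qed
  have "(\<Sum>s\<in>S. w s * (if s = b then \<beta> * 1 + (1 - \<beta>) * 1 else 1)) = sum w S"
    by (rule sum.cong) simp_all
  with sum_eq[of "\<lambda>_. 1"] w(2) show "sum w' (insert a S) = 1" by simp
qed

theorem finite_minimax:
  fixes f :: "'s \<Rightarrow> 'e \<Rightarrow> real"
  assumes "finite S" "S \<noteq> {}"
    and "\<And>e1 e2 \<mu>. e1 \<in> E \<Longrightarrow> e2 \<in> E \<Longrightarrow> 0 \<le> \<mu> \<Longrightarrow> \<mu> \<le> 1 \<Longrightarrow>
      \<exists>e\<in>E. \<forall>s\<in>S. f s e \<le> \<mu> * f s e1 + (1 - \<mu>) * f s e2"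
    and "\<And>e. e \<in> E \<Longrightarrow> \<exists>s\<in>S. 0 \<le> f s e"
  shows "\<exists>w. (\<forall>s\<in>S. 0 \<le> w s) \<and> sum w S = 1 \<and> (\<forall>e\<in>E. 0 \<le> (\<Sum>s\<in>S. w s * f s e))"
  using assms
proof (induction S arbitrary: f rule: finite_ne_induct)
  case (singleton a)
  then show ?case by (intro exI[of _ "\<lambda>_. 1"]) auto
next
  case (insert a S)
  obtain b where b: "b \<in> S" using insert.hyps(2) by auto
  obtain \<beta> where \<beta>: "0 \<le> \<beta>" "\<beta> \<le> 1"
    and merged: "\<forall>e\<in>E. \<exists>s\<in>S. 0 \<le> (if s = b then \<beta> * f b e + (1 - \<beta>) * f a e else f s e)"
    using finite_minimax_merge[OF insert.prems b] by auto
  define g where "g s e = (if s = b then \<beta> * f b e + (1 - \<beta>) * f a e else f s e)" for s e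
  have "\<exists>e\<in>E. \<forall>s\<in>S. g s e \<le> \<mu> * g s e1 + (1 - \<mu>) * g s e2"
    if mix: "e1 \<in> E" "e2 \<in> E" "0 \<le> \<mu>" "\<mu> \<le> 1" for e1 e2 \<mu>
  proof -
    obtain e where e: "e \<in> E" "\<forall>s\<in>insert a S. f s e \<le> \<mu> * f s e1 + (1 - \<mu>) * f s e2"
      using insert.prems(1)[OF mix] by blast
    have "g s e \<le> \<mu> * g s e1 + (1 - \<mu>) * g s e2" if "s \<in> S" for s
    proof (cases "s = b")
      case True
      have "\<beta> * f b e \<le> \<beta> * (\<mu> * f b e1 + (1 - \<mu>) * f b e2)"
        using e(2) b \<beta> by (intro mult_left_mono) auto
      moreover have "(1 - \<beta>) * f a e \<le> (1 - \<beta>) * (\<mu> * f a e1 + (1 - \<mu>) * f a e2)"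
        using e(2) \<beta> by (intro mult_left_mono) auto
      ultimately show ?thesis using True by (simp add: g_def algebra_simps)
    qed (use e(2) that in \<open>simp add: g_def\<close>)
    with e(1) show ?thesis by blast
  qed
  moreover have "\<exists>s\<in>S. 0 \<le> g s e" if "e \<in> E" for e
    using merged that by (simp add: g_def)
  ultimately obtain w where w: "\<forall>s\<in>S. 0 \<le> w s" "sum w S = 1" "\<forall>e\<in>E. 0 \<le> (\<Sum>s\<in>S. w s * g s e)"
    using insert.IH[of g] by blast
  obtain w' where "\<forall>s\<in>insert a S. 0 \<le> w' s" "sum w' (insert a S) = 1"
    "\<And>h. (\<Sum>s\<in>insert a S. w' s * h s) = (\<Sum>s\<in>S. w s * (if s = b then \<beta> * h b + (1 - \<beta>) * h a else h s))"
    using unmerge_weights[OF insert.hyps(1,3) b \<beta> w(1,2)] by blast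
  with w(3) show ?case by (intro exI[of _ w']) (simp add: g_def)
qed

section \<open>Continuity of the scalar risk in the parameters\<close>

lemma normal_density_sq:
  "(normal_density a 1 x)\<^sup>2 = exp ((a - b)\<^sup>2) * normal_density (2 * a - b) 1 x * normal_density b 1 x"
proof -
  have e: "-(x - a)\<^sup>2 = (a - b)\<^sup>2 + (-(x - (2 * a - b))\<^sup>2 / 2) + (-(x - b)\<^sup>2 / 2)"
    by (simp add: power2_eq_square field_simps)
  have "(exp (- ((x - a)\<^sup>2 / 2)))\<^sup>2 = exp (-(x - a)\<^sup>2)"
    by (simp add: power2_eq_square[of "exp _"] mult_exp_exp)
  then have "(normal_density a 1 x)\<^sup>2 = (1 / sqrt (2 * pi))\<^sup>2 * exp (-(x - a)\<^sup>2)"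
    by (simp add: normal_density_def power_divide)
  also have "\<dots> = (1 / sqrt (2 * pi))\<^sup>2
      * (exp ((a - b)\<^sup>2) * exp (-(x - (2 * a - b))\<^sup>2 / 2) * exp (-(x - b)\<^sup>2 / 2))"
    unfolding e by (simp only: exp_add)
  also have "\<dots> = exp ((a - b)\<^sup>2) * normal_density (2 * a - b) 1 x * normal_density b 1 x"
    by (simp add: normal_density_def power2_eq_square algebra_simps)
  finally show ?thesis .
qed

text \<open>Bound on the total variation via the \<open>\<chi>\<^sup>2\<close>-divergence: by AM-GM,
  \<open>|p - q| \<le> d q / 2 + (p - q)\<^sup>2 / (2 d q)\<close> with \<open>d = |a - b|\<close>, and
  \<open>\<integral> p\<^sup>2 / q = exp ((a - b)\<^sup>2) \<le> 1 + 2 d\<^sup>2\<close> for \<open>d \<le> 1\<close>.\<close>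

lemma nn_integral_abs_normal_density_diff_le:
  assumes "\<bar>a - b\<bar> \<le> 1"
  shows "(\<integral>\<^sup>+x. ennreal \<bar>normal_density a 1 x - normal_density b 1 x\<bar> \<partial>lborel) \<le> ennreal (2 * \<bar>a - b\<bar>)"
proof (cases "a = b")
  case False
  define d where "d = \<bar>a - b\<bar>"
  have d: "0 < d" "d \<le> 1" using False assms by (auto simp: d_def)
  define E where "E = exp ((a - b)\<^sup>2)"
  let ?pa = "normal_density a 1" and ?pb = "normal_density b 1" and ?pc = "normal_density (2 * a - b) 1"
  define R where "R x = d / 2 * ?pb x + (E * ?pc x - 2 * ?pa x + ?pb x) / (2 * d)" for x
  have pointwise: "\<bar>?pa x - ?pb x\<bar> \<le> R x" for x
  proof -
    have q: "0 < ?pb x" by (simp add: normal_density_pos)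
    have "0 \<le> (\<bar>?pa x - ?pb x\<bar> - d * ?pb x)\<^sup>2" by simp
    then have "2 * d * ?pb x * \<bar>?pa x - ?pb x\<bar> \<le> (?pa x - ?pb x)\<^sup>2 + d\<^sup>2 * (?pb x)\<^sup>2"
      by (simp add: power2_eq_square algebra_simps abs_mult_self_eq)
    then have "\<bar>?pa x - ?pb x\<bar> \<le> d / 2 * ?pb x + (?pa x - ?pb x)\<^sup>2 / ?pb x / (2 * d)"
      using q d by (simp add: field_simps power2_eq_square)
    moreover have "(?pa x)\<^sup>2 = E * ?pc x * ?pb x"
      unfolding E_def by (rule normal_density_sq)
    then have "(?pa x - ?pb x)\<^sup>2 / ?pb x = E * ?pc x - 2 * ?pa x + ?pb x"
      using q by (simp only: power2_diff) (simp add: field_simps power2_eq_square)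
    ultimately show ?thesis by (simp add: R_def)
  qed
  have integrable_R: "integrable lborel R"
    unfolding R_def by (intro Bochner_Integration.integrable_add Bochner_Integration.integrable_diff
        integrable_mult_right integrable_divide integrable_normal_density) simp_all
  have "(\<integral>x. R x \<partial>lborel) = d / 2 + (E - 1) / (2 * d)"
    unfolding R_def by (simp add: Bochner_Integration.integral_add Bochner_Integration.integral_diff)
  also have "\<dots> \<le> 2 * d"
  proof -
    have "(a - b)\<^sup>2 = d\<^sup>2" by (simp add: d_def)
    moreover have "d\<^sup>2 \<le> 1" using d by (simp add: power_le_one)
    ultimately have "E \<le> 1 + d\<^sup>2 + (d\<^sup>2)\<^sup>2"
      unfolding E_def using exp_bound[of "d\<^sup>2"] by simp
    moreover have "(d\<^sup>2)\<^sup>2 \<le> d\<^sup>2"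
      using d \<open>d\<^sup>2 \<le> 1\<close> by (simp add: power2_eq_square mult_left_le_one_le)
    ultimately have "(E - 1) / (2 * d) \<le> 2 * d\<^sup>2 / (2 * d)"
      using d by (intro divide_right_mono) auto
    then show ?thesis using d by (simp add: power2_eq_square)
  qed
  finally have "(\<integral>x. R x \<partial>lborel) \<le> 2 * \<bar>a - b\<bar>" by (simp add: d_def)
  moreover have "(\<integral>\<^sup>+x. ennreal (R x) \<partial>lborel) = ennreal (\<integral>x. R x \<partial>lborel)"
    by (rule nn_integral_eq_integral[OF integrable_R]) (auto intro: order_trans[OF abs_ge_zero pointwise])
  ultimately show ?thesis
    by (metis (no_types, lifting) ennreal_leI nn_integral_mono order_trans pointwise)
qed simp

lemma nn_integral_gauss1_shift_le:
  fixes G :: "real \<Rightarrow> ennreal"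
  assumes "G \<in> borel_measurable borel" "\<And>x. G x \<le> ennreal H" "H \<ge> 0" "\<bar>a - b\<bar> \<le> 1"
  shows "(\<integral>\<^sup>+x. G x \<partial>gauss1 a) \<le> (\<integral>\<^sup>+x. G x \<partial>gauss1 b) + ennreal (2 * H * \<bar>a - b\<bar>)"
proof -
  let ?pa = "normal_density a 1" and ?pb = "normal_density b 1"
  have "ennreal (?pa x) * G x \<le> ennreal (?pb x) * G x + ennreal \<bar>?pa x - ?pb x\<bar> * ennreal H" for x
  proof -
    have "ennreal (?pa x) \<le> ennreal (?pb x) + ennreal \<bar>?pa x - ?pb x\<bar>"
      by (simp add: ennreal_plus[symmetric] del: ennreal_plus)
    then have "ennreal (?pa x) * G x \<le> ennreal (?pb x) * G x + ennreal \<bar>?pa x - ?pb x\<bar> * G x"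
      by (metis distrib_right mult_right_mono zero_le)
    also have "\<dots> \<le> ennreal (?pb x) * G x + ennreal \<bar>?pa x - ?pb x\<bar> * ennreal H"
      using assms(2) by (intro add_left_mono mult_left_mono) auto
    finally show ?thesis .
  qed
  then have "(\<integral>\<^sup>+x. G x \<partial>gauss1 a)
      \<le> (\<integral>\<^sup>+x. ennreal (?pb x) * G x \<partial>lborel) + (\<integral>\<^sup>+x. ennreal \<bar>?pa x - ?pb x\<bar> \<partial>lborel) * ennreal H"
    unfolding gauss1_def using assms(1)
    by (subst nn_integral_density, simp_all, subst nn_integral_multc[symmetric], simp,
        subst nn_integral_add[symmetric], simp_all add: nn_integral_mono)
  also have "\<dots> \<le> (\<integral>\<^sup>+x. G x \<partial>gauss1 b) + ennreal (2 * \<bar>a - b\<bar>) * ennreal H"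
    unfolding gauss1_def using assms(1)
    by (subst nn_integral_density) (auto intro!: add_left_mono mult_right_mono
        nn_integral_abs_normal_density_diff_le assms(4))
  finally show ?thesis
    using assms(3) by (simp add: ennreal_mult[symmetric] mult_ac)
qed

lemma power2_diff_le_of_abs_le: "\<bar>x\<bar> \<le> T \<Longrightarrow> \<bar>c\<bar> \<le> T \<Longrightarrow> (x - c)\<^sup>2 \<le> 4 * T\<^sup>2"
  for x c T :: real
proof -
  assume "\<bar>x\<bar> \<le> T" "\<bar>c\<bar> \<le> T"
  then have "\<bar>x - c\<bar> \<le> 2 * T" by linarith
  then have "\<bar>x - c\<bar>\<^sup>2 \<le> (2 * T)\<^sup>2" by (intro power_mono) auto
  then show ?thesis by (simp add: power_mult_distrib)
qed

lemma nn_integral_gauss1_sq_error_shift_le: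
  fixes g :: "real \<Rightarrow> real"
  assumes meas: "g \<in> borel_measurable borel" and bounded: "\<And>v. \<bar>g v\<bar> \<le> T"
    and th: "\<bar>th\<bar> \<le> T" "\<bar>th'\<bar> \<le> T" "\<bar>th - th'\<bar> \<le> 1"
  shows "(\<integral>\<^sup>+v. ennreal ((g v - th)\<^sup>2) \<partial>gauss1 th)
       \<le> (\<integral>\<^sup>+v. ennreal ((g v - th')\<^sup>2) \<partial>gauss1 th') + ennreal ((4 * T + 8 * T\<^sup>2) * \<bar>th - th'\<bar>)"
proof -
  interpret prob_space "gauss1 th" by simp
  have T: "T \<ge> 0" using th(1) by linarith
  have shift: "(g v - th)\<^sup>2 \<le> (g v - th')\<^sup>2 + 4 * T * \<bar>th - th'\<bar>" for v
  proof -
    have "(g v - th)\<^sup>2 - (g v - th')\<^sup>2 = (th' - th) * (2 * g v - th - th')"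
      by (simp add: power2_eq_square algebra_simps)
    also have "\<dots> \<le> \<bar>th' - th\<bar> * \<bar>2 * g v - th - th'\<bar>"
      by (metis abs_ge_self abs_mult)
    also have "\<dots> \<le> \<bar>th - th'\<bar> * (4 * T)"
      using bounded[of v] th by (intro mult_mono) auto
    finally show ?thesis by (simp add: algebra_simps)
  qed
  have "(g v - th')\<^sup>2 \<le> 4 * T\<^sup>2" for v
    using bounded th(2) by (rule power2_diff_le_of_abs_le)
  then have shift_mean: "(\<integral>\<^sup>+v. ennreal ((g v - th')\<^sup>2) \<partial>gauss1 th)
      \<le> (\<integral>\<^sup>+v. ennreal ((g v - th')\<^sup>2) \<partial>gauss1 th') + ennreal (2 * (4 * T\<^sup>2) * \<bar>th - th'\<bar>)"
    using meas th(3) by (intro nn_integral_gauss1_shift_le) (auto intro: ennreal_leI)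
  have "(\<integral>\<^sup>+v. ennreal ((g v - th)\<^sup>2) \<partial>gauss1 th)
      \<le> (\<integral>\<^sup>+v. ennreal ((g v - th')\<^sup>2) + ennreal (4 * T * \<bar>th - th'\<bar>) \<partial>gauss1 th)"
    using T by (intro nn_integral_mono) (simp add: shift ennreal_plus[symmetric] del: ennreal_plus)
  also have "\<dots> = (\<integral>\<^sup>+v. ennreal ((g v - th')\<^sup>2) \<partial>gauss1 th) + ennreal (4 * T * \<bar>th - th'\<bar>)"
    using meas by (subst nn_integral_add) (auto simp: emeasure_space_1[simplified])
  also have "\<dots> \<le> (\<integral>\<^sup>+v. ennreal ((g v - th')\<^sup>2) \<partial>gauss1 th')
      + (ennreal (2 * (4 * T\<^sup>2) * \<bar>th - th'\<bar>) + ennreal (4 * T * \<bar>th - th'\<bar>))"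
    using shift_mean by (simp add: add.assoc[symmetric] add_right_mono)
  also have "ennreal (2 * (4 * T\<^sup>2) * \<bar>th - th'\<bar>) + ennreal (4 * T * \<bar>th - th'\<bar>)
      = ennreal ((4 * T + 8 * T\<^sup>2) * \<bar>th - th'\<bar>)"
    using T by (simp add: ennreal_plus[symmetric] algebra_simps del: ennreal_plus)
  finally show ?thesis .
qed

lemma risk1_perturbation_le:
  assumes meas: "(\<lambda>z. e (fst z) (snd z)) \<in> borel_measurable (borel \<Otimes>\<^sub>M borel)"
    and bounded: "\<And>u v. \<bar>e u v\<bar> \<le> T" and th: "\<bar>th\<bar> \<le> T" "\<bar>th'\<bar> \<le> T"
    and close: "\<bar>th - th'\<bar> \<le> 1" "\<bar>(s * th + de) - (s * th' + de')\<bar> \<le> 1"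
  shows "risk1 s th de e \<le> risk1 s th' de' e + ennreal ((4 * T + 8 * T\<^sup>2) * \<bar>th - th'\<bar>
           + 8 * T\<^sup>2 * \<bar>(s * th + de) - (s * th' + de')\<bar>)"
proof -
  define m where "m = s * th + de"
  define m' where "m' = s * th' + de'"
  have T: "T \<ge> 0" using th by linarith
  interpret Gt: prob_space "gauss1 th" by simp
  interpret Gt': prob_space "gauss1 th'" by simp
  interpret Gm: prob_space "gauss1 m" by simp
  have meas_v: "(\<lambda>v. e u v) \<in> borel_measurable borel" for u
  proof -
    have "(\<lambda>(u, v). e u v) \<in> borel_measurable (borel \<Otimes>\<^sub>M borel)"
      using meas by (simp add: case_prod_beta)
    from measurable_Pair2[OF this, of u] show ?thesis by simp
  qed
  have meas_sq: "(\<lambda>z. ennreal ((e (fst z) (snd z) - c)\<^sup>2)) \<in> borel_measurable (borel \<Otimes>\<^sub>M borel)" for c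
    using meas by measurable
  define G where "G u = (\<integral>\<^sup>+v. ennreal ((e u v - th')\<^sup>2) \<partial>gauss1 th')" for u
  have meas_G: "G \<in> borel_measurable borel"
  proof -
    have "(\<lambda>(u, v). ennreal ((e u v - th')\<^sup>2)) \<in> borel_measurable (borel \<Otimes>\<^sub>M gauss1 th')"
      using meas_sq[of th'] by (simp add: case_prod_beta cong: measurable_cong_sets)
    then show ?thesis unfolding G_def by (rule Gt'.borel_measurable_nn_integral)
  qed
  have G_le: "G u \<le> ennreal (4 * T\<^sup>2)" for u
  proof -
    have "G u \<le> (\<integral>\<^sup>+v. ennreal (4 * T\<^sup>2) \<partial>gauss1 th')"
      unfolding G_def using bounded th(2)
      by (intro nn_integral_mono ennreal_leI power2_diff_le_of_abs_le)
    then show ?thesis by (simp add: Gt'.emeasure_space_1[simplified])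
  qed
  have "risk1 s th de e = (\<integral>\<^sup>+u. \<integral>\<^sup>+v. ennreal ((e u v - th)\<^sup>2) \<partial>gauss1 th \<partial>gauss1 m)"
    unfolding risk1_def m_def by (subst Gt.nn_integral_fst[symmetric]) (use meas_sq in auto)
  also have "\<dots> \<le> (\<integral>\<^sup>+u. G u + ennreal ((4 * T + 8 * T\<^sup>2) * \<bar>th - th'\<bar>) \<partial>gauss1 m)"
    unfolding G_def using meas_v bounded th close(1)
    by (intro nn_integral_mono nn_integral_gauss1_sq_error_shift_le)
  also have "\<dots> = (\<integral>\<^sup>+u. G u \<partial>gauss1 m) + ennreal ((4 * T + 8 * T\<^sup>2) * \<bar>th - th'\<bar>)"
    using meas_G by (simp add: nn_integral_add Gm.emeasure_space_1[simplified])
  also have "(\<integral>\<^sup>+u. G u \<partial>gauss1 m) \<le> (\<integral>\<^sup>+u. G u \<partial>gauss1 m') + ennreal (2 * (4 * T\<^sup>2) * \<bar>m - m'\<bar>)"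
    using close(2) by (intro nn_integral_gauss1_shift_le meas_G G_le) (simp_all add: m_def m'_def)
  also have "(\<integral>\<^sup>+u. G u \<partial>gauss1 m') = risk1 s th' de' e"
    unfolding risk1_def G_def m'_def by (subst Gt'.nn_integral_fst[symmetric]) (use meas_sq in auto)
  finally show ?thesis
    using T by (simp add: add_right_mono ennreal_plus[symmetric] m_def m'_def algebra_simps
        del: ennreal_plus)
qed

section \<open>Approximately least favourable priors in the scalar problem\<close>

definition bounded_estimators :: "real \<Rightarrow> (real \<Rightarrow> real \<Rightarrow> real) set" where
  "bounded_estimators T = {e. (\<lambda>z. e (fst z) (snd z)) \<in> borel_measurable (borel \<Otimes>\<^sub>M borel) \<and> (\<forall>u v. \<bar>e u v\<bar> \<le> T)}"

definition clip :: "real \<Rightarrow> real \<Rightarrow> real" where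
  "clip T x = max (- T) (min T x)"

lemma clip_estimator_in_bounded_estimators:
  assumes "(\<lambda>z. e (fst z) (snd z)) \<in> borel_measurable (borel \<Otimes>\<^sub>M borel)" "T \<ge> 0"
  shows "(\<lambda>u v. clip T (e u v)) \<in> bounded_estimators T"
  using assms unfolding bounded_estimators_def clip_def by auto

lemma risk1_clip_le:
  assumes "\<bar>th\<bar> \<le> T"
  shows "risk1 s th de (\<lambda>u v. clip T (e u v)) \<le> risk1 s th de e"
proof -
  have "\<bar>clip T x - th\<bar> \<le> \<bar>x - th\<bar>" for x
    using assms by (auto simp: clip_def max_def min_def abs_le_iff)
  then have "(clip T x - th)\<^sup>2 \<le> (x - th)\<^sup>2" for x
    by (simp add: abs_le_square_iff)
  then show ?thesis unfolding risk1_def by (intro nn_integral_mono ennreal_leI)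
qed

lemma risk1_le_of_bounded:
  assumes "\<And>u v. \<bar>e u v\<bar> \<le> T" "\<bar>th\<bar> \<le> T"
  shows "risk1 s th de e \<le> ennreal (4 * T\<^sup>2)"
proof -
  interpret prob_space "gauss1 (s * th + de) \<Otimes>\<^sub>M gauss1 th" by simp
  have "(e u v - th)\<^sup>2 \<le> 4 * T\<^sup>2" for u v
    using assms by (rule power2_diff_le_of_abs_le)
  then have "risk1 s th de e \<le> (\<integral>\<^sup>+z. ennreal (4 * T\<^sup>2) \<partial>(gauss1 (s * th + de) \<Otimes>\<^sub>M gauss1 th))"
    unfolding risk1_def by (intro nn_integral_mono ennreal_leI)
  then show ?thesis by (simp add: emeasure_space_1)
qed

lemma risk1_mixture_le:
  assumes "(\<lambda>z. e1 (fst z) (snd z)) \<in> borel_measurable (borel \<Otimes>\<^sub>M borel)"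
    and "(\<lambda>z. e2 (fst z) (snd z)) \<in> borel_measurable (borel \<Otimes>\<^sub>M borel)"
    and "0 \<le> \<mu>" "\<mu> \<le> 1"
  shows "risk1 s th de (\<lambda>u v. \<mu> * e1 u v + (1 - \<mu>) * e2 u v)
       \<le> ennreal \<mu> * risk1 s th de e1 + ennreal (1 - \<mu>) * risk1 s th de e2"
proof -
  have convex: "(\<mu> * a + (1 - \<mu>) * b - th)\<^sup>2 \<le> \<mu> * (a - th)\<^sup>2 + (1 - \<mu>) * (b - th)\<^sup>2" for a b
  proof -
    have "\<mu> * (a - th)\<^sup>2 + (1 - \<mu>) * (b - th)\<^sup>2 - (\<mu> * a + (1 - \<mu>) * b - th)\<^sup>2 = \<mu> * (1 - \<mu>) * (a - b)\<^sup>2"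
      by (simp add: power2_eq_square algebra_simps)
    moreover have "0 \<le> \<mu> * (1 - \<mu>) * (a - b)\<^sup>2" using assms(3,4) by simp
    ultimately show ?thesis by linarith
  qed
  have "risk1 s th de (\<lambda>u v. \<mu> * e1 u v + (1 - \<mu>) * e2 u v)
      \<le> (\<integral>\<^sup>+z. ennreal \<mu> * ennreal ((e1 (fst z) (snd z) - th)\<^sup>2)
              + ennreal (1 - \<mu>) * ennreal ((e2 (fst z) (snd z) - th)\<^sup>2) \<partial>(gauss1 (s * th + de) \<Otimes>\<^sub>M gauss1 th))"
    unfolding risk1_def using assms(3,4) convex
    by (intro nn_integral_mono) (simp add: ennreal_mult[symmetric] ennreal_plus[symmetric] del: ennreal_plus)
  also have "\<dots> = ennreal \<mu> * risk1 s th de e1 + ennreal (1 - \<mu>) * risk1 s th de e2"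
    unfolding risk1_def using assms(1,2) by (simp add: nn_integral_add nn_integral_cmult)
  finally show ?thesis .
qed

lemma RN1_le_worst_risk1:
  "(\<lambda>z. e (fst z) (snd z)) \<in> borel_measurable (borel \<Otimes>\<^sub>M borel) \<Longrightarrow> RN1 tau zeta s \<le> worst_risk1 tau zeta s e"
  unfolding RN1_def by (rule INF_lower) simp

lemma RN1_le_4_tau_sq:
  assumes "tau \<ge> 0"
  shows "RN1 tau zeta s \<le> ennreal (4 * tau\<^sup>2)"
proof -
  have "RN1 tau zeta s \<le> worst_risk1 tau zeta s (\<lambda>u v. 0)" by (rule RN1_le_worst_risk1) simp
  also have "\<dots> \<le> ennreal (4 * tau\<^sup>2)" unfolding worst_risk1_def
    by (intro SUP_least risk1_le_of_bounded) (use assms in auto)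
  finally show ?thesis .
qed

text \<open>By \<open>risk1_perturbation_le\<close>, the risks of all estimators bounded by \<open>tau\<close> are
  equicontinuous on the compact parameter rectangle, so a finite net controls them uniformly.\<close>

lemma risk1_finite_net:
  assumes tau: "tau \<ge> 0" and zeta: "zeta \<ge> 0" and eps: "eps > 0"
  obtains S where "finite S" "S \<noteq> {}" "S \<subseteq> {-tau..tau} \<times> {-zeta..zeta}"
    and "\<And>e p. e \<in> bounded_estimators tau \<Longrightarrow> p \<in> {-tau..tau} \<times> {-zeta..zeta} \<Longrightarrow>
           \<exists>q\<in>S. risk1 s (fst p) (snd p) e \<le> risk1 s (fst q) (snd q) e + ennreal eps"
proof -
  define K where "K = {-tau..tau} \<times> {-zeta..zeta}"
  define C where "C = 4 * tau + 8 * tau\<^sup>2 + 8 * tau\<^sup>2 * (\<bar>s\<bar> + 1)"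
  define h where "h = min (1 / (\<bar>s\<bar> + 1)) (eps / (C + 1))"
  have C: "C \<ge> 0" using tau by (simp add: C_def)
  have h: "h > 0" using eps C by (simp add: h_def)
  have "h \<le> 1 / (\<bar>s\<bar> + 1)" by (simp add: h_def)
  then have h1: "(\<bar>s\<bar> + 1) * h \<le> 1" by (simp add: field_simps)
  moreover have "h \<le> (\<bar>s\<bar> + 1) * h" using h by (simp add: algebra_simps)
  ultimately have "h \<le> 1" by linarith
  have "C * h \<le> C * (eps / (C + 1))" using C by (intro mult_left_mono) (auto simp: h_def)
  also have "\<dots> \<le> eps" using C eps by (simp add: field_simps)
  finally have Ch: "C * h \<le> eps" .
  have "compact K" unfolding K_def by (intro compact_Times compact_Icc)
  then obtain S where S: "finite S" "S \<subseteq> K" "K \<subseteq> (\<Union>x\<in>S. ball x h)"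
    using compact_imp_seq_compact seq_compact_imp_totally_bounded h by metis
  have "S \<noteq> {}" using S(3) tau zeta by (auto simp: K_def)
  moreover have "\<exists>q\<in>S. risk1 s (fst p) (snd p) e \<le> risk1 s (fst q) (snd q) e + ennreal eps"
    if e: "e \<in> bounded_estimators tau" and p: "p \<in> K" for e p
  proof -
    obtain q where q: "q \<in> S" "dist q p < h" using S(3) p by auto
    then have dq: "\<bar>fst p - fst q\<bar> \<le> h" "\<bar>snd p - snd q\<bar> \<le> h"
      using dist_fst_le[of q p] dist_snd_le[of q p] by (auto simp: dist_real_def)
    have "\<bar>(s * fst p + snd p) - (s * fst q + snd q)\<bar> \<le> \<bar>s\<bar> * \<bar>fst p - fst q\<bar> + \<bar>snd p - snd q\<bar>"
      by (metis abs_mult abs_triangle_ineq add_diff_add right_diff_distrib)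
    also have "\<dots> \<le> \<bar>s\<bar> * h + h" using dq by (intro add_mono mult_left_mono) auto
    also have "\<dots> = (\<bar>s\<bar> + 1) * h" by (simp add: algebra_simps)
    finally have dm: "\<bar>(s * fst p + snd p) - (s * fst q + snd q)\<bar> \<le> (\<bar>s\<bar> + 1) * h" .
    have "q \<in> K" using q S by auto
    then have "risk1 s (fst p) (snd p) e \<le> risk1 s (fst q) (snd q) e + ennreal ((4 * tau + 8 * tau\<^sup>2) * \<bar>fst p - fst q\<bar>
        + 8 * tau\<^sup>2 * \<bar>(s * fst p + snd p) - (s * fst q + snd q)\<bar>)"
      using e p dq dm h1 \<open>h \<le> 1\<close>
      by (intro risk1_perturbation_le) (auto simp: bounded_estimators_def K_def)
    also have "\<dots> \<le> risk1 s (fst q) (snd q) e + ennreal eps"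
    proof (intro add_left_mono ennreal_leI)
      have "(4 * tau + 8 * tau\<^sup>2) * \<bar>fst p - fst q\<bar>
          + 8 * tau\<^sup>2 * \<bar>(s * fst p + snd p) - (s * fst q + snd q)\<bar>
          \<le> (4 * tau + 8 * tau\<^sup>2) * h + 8 * tau\<^sup>2 * ((\<bar>s\<bar> + 1) * h)"
        using dq dm tau by (intro add_mono mult_left_mono) auto
      then show "(4 * tau + 8 * tau\<^sup>2) * \<bar>fst p - fst q\<bar>
          + 8 * tau\<^sup>2 * \<bar>(s * fst p + snd p) - (s * fst q + snd q)\<bar> \<le> eps"
        using Ch by (simp add: C_def algebra_simps)
    qed
    finally show ?thesis using q(1) by blast
  qed
  ultimately show ?thesis using that S(1,2) by (simp add: K_def)
qed

lemma mixture_in_bounded_estimators: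
  assumes e: "e1 \<in> bounded_estimators T" "e2 \<in> bounded_estimators T" and \<mu>: "0 \<le> \<mu>" "\<mu> \<le> 1"
  shows "(\<lambda>u v. \<mu> * e1 u v + (1 - \<mu>) * e2 u v) \<in> bounded_estimators T"
proof -
  have "\<bar>\<mu> * e1 u v + (1 - \<mu>) * e2 u v\<bar> \<le> \<mu> * \<bar>e1 u v\<bar> + (1 - \<mu>) * \<bar>e2 u v\<bar>" for u v
    using \<mu> by (metis abs_mult abs_of_nonneg abs_triangle_ineq diff_ge_0_iff_ge)
  also have "\<dots> u v \<le> \<mu> * T + (1 - \<mu>) * T" for u v
    using e \<mu> by (intro add_mono mult_left_mono) (auto simp: bounded_estimators_def)
  also have "\<mu> * T + (1 - \<mu>) * T = T" by (simp add: algebra_simps)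
  finally have "\<bar>\<mu> * e1 u v + (1 - \<mu>) * e2 u v\<bar> \<le> T" for u v .
  moreover have "(\<lambda>z. \<mu> * e1 (fst z) (snd z) + (1 - \<mu>) * e2 (fst z) (snd z)) \<in> borel_measurable (borel \<Otimes>\<^sub>M borel)"
    using e unfolding bounded_estimators_def by (intro borel_measurable_add borel_measurable_times) auto
  ultimately show ?thesis unfolding bounded_estimators_def by simp
qed

lemma RN1_le_risk1_at_net_point:
  assumes S: "finite S" "S \<noteq> {}"
    and net: "\<And>p. p \<in> {-tau..tau} \<times> {-zeta..zeta} \<Longrightarrow>
                \<exists>q\<in>S. risk1 s (fst p) (snd p) e \<le> risk1 s (fst q) (snd q) e + ennreal eps"
    and meas: "(\<lambda>z. e (fst z) (snd z)) \<in> borel_measurable (borel \<Otimes>\<^sub>M borel)"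
  shows "\<exists>q\<in>S. RN1 tau zeta s \<le> risk1 s (fst q) (snd q) e + ennreal eps"
proof -
  let ?M = "Max ((\<lambda>q. risk1 s (fst q) (snd q) e + ennreal eps) ` S)"
  have "RN1 tau zeta s \<le> worst_risk1 tau zeta s e" using meas by (rule RN1_le_worst_risk1)
  also have "\<dots> \<le> ?M"
    unfolding worst_risk1_def
  proof (intro SUP_least)
    fix th de assume "th \<in> {-tau..tau}" "de \<in> {-zeta..zeta}"
    then obtain q where "q \<in> S" "risk1 s th de e \<le> risk1 s (fst q) (snd q) e + ennreal eps"
      using net[of "(th, de)"] by auto
    then show "risk1 s th de e \<le> ?M" using S(1) by (auto intro: order_trans[OF _ Max_ge])
  qed
  moreover have "?M \<in> (\<lambda>q. risk1 s (fst q) (snd q) e + ennreal eps) ` S"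
    using S by (intro Max_in) auto
  ultimately show ?thesis by force
qed

lemma risk1_bounded_estimator_eq_ennreal:
  assumes "e \<in> bounded_estimators T" "\<bar>th\<bar> \<le> T"
  shows "ennreal (enn2real (risk1 s th de e)) = risk1 s th de e"
proof -
  have "risk1 s th de e \<le> ennreal (4 * T\<^sup>2)"
    using assms by (intro risk1_le_of_bounded) (auto simp: bounded_estimators_def)
  then have "risk1 s th de e < top" by (metis ennreal_less_top le_less_trans)
  then show ?thesis by (simp add: less_top[symmetric])
qed

lemma enn2real_risk1_mixture_le:
  assumes e: "e1 \<in> bounded_estimators T" "e2 \<in> bounded_estimators T"
    and \<mu>: "0 \<le> \<mu>" "\<mu> \<le> 1" and th: "\<bar>th\<bar> \<le> T"
  shows "enn2real (risk1 s th de (\<lambda>u v. \<mu> * e1 u v + (1 - \<mu>) * e2 u v))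
       \<le> \<mu> * enn2real (risk1 s th de e1) + (1 - \<mu>) * enn2real (risk1 s th de e2)"
proof -
  let ?r = "\<lambda>e. enn2real (risk1 s th de e)"
  have "ennreal (?r (\<lambda>u v. \<mu> * e1 u v + (1 - \<mu>) * e2 u v))
      \<le> ennreal \<mu> * ennreal (?r e1) + ennreal (1 - \<mu>) * ennreal (?r e2)"
    unfolding risk1_bounded_estimator_eq_ennreal[OF mixture_in_bounded_estimators[OF e \<mu>] th]
      risk1_bounded_estimator_eq_ennreal[OF e(1) th] risk1_bounded_estimator_eq_ennreal[OF e(2) th]
    using e \<mu> by (intro risk1_mixture_le) (auto simp: bounded_estimators_def)
  also have "\<dots> = ennreal (\<mu> * ?r e1 + (1 - \<mu>) * ?r e2)"
    using \<mu> by (simp add: ennreal_mult[symmetric] ennreal_plus[symmetric] del: ennreal_plus)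
  finally show ?thesis using \<mu> by (subst (asm) ennreal_le_iff) auto
qed

text \<open>The finite minimax theorem, applied on a finite net to the (finite, real) risks of the
  bounded estimators, yields weights on the net whose Bayes risk is close to the minimax risk.\<close>

lemma bayes_weights_for_bounded_estimators:
  assumes tau: "tau \<ge> 0" and zeta: "zeta \<ge> 0" and eps: "eps > 0"
  obtains S w where "finite S" "S \<subseteq> {-tau..tau} \<times> {-zeta..zeta}" "\<forall>q\<in>S. 0 \<le> w q" "sum w S = 1"
    and "\<And>e. e \<in> bounded_estimators tau \<Longrightarrow>
           RN1 tau zeta s \<le> (\<Sum>q\<in>S. ennreal (w q) * risk1 s (fst q) (snd q) e) + ennreal eps"
proof -
  let ?E = "bounded_estimators tau"
  obtain S where S: "finite S" "S \<noteq> {}" "S \<subseteq> {-tau..tau} \<times> {-zeta..zeta}"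
    and net: "\<And>e p. e \<in> ?E \<Longrightarrow> p \<in> {-tau..tau} \<times> {-zeta..zeta} \<Longrightarrow>
                \<exists>q\<in>S. risk1 s (fst p) (snd p) e \<le> risk1 s (fst q) (snd q) e + ennreal eps"
    by (rule risk1_finite_net[OF tau zeta eps, where s = s]) blast
  have "RN1 tau zeta s < top"
    using RN1_le_4_tau_sq[OF tau, of zeta s] by (metis ennreal_less_top le_less_trans)
  then obtain r0 where r0: "RN1 tau zeta s = ennreal r0" using less_top_ennreal by blast
  define r where "r q e = enn2real (risk1 s (fst q) (snd q) e)" for q e
  have q_tau: "\<bar>fst q\<bar> \<le> tau" if "q \<in> S" for q
    using that S(3) by (cases q) (auto simp: abs_le_iff)
  have r: "risk1 s (fst q) (snd q) e = ennreal (r q e)" if "e \<in> ?E" "q \<in> S" for e q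
    unfolding r_def using that q_tau by (intro risk1_bounded_estimator_eq_ennreal[symmetric])
  have r_nonneg: "0 \<le> r q e" for q e by (simp add: r_def)
  define f where "f q e = r q e - (r0 - eps)" for q e
  have "\<exists>q\<in>S. 0 \<le> f q e" if e: "e \<in> ?E" for e
  proof -
    obtain q where q: "q \<in> S" "RN1 tau zeta s \<le> risk1 s (fst q) (snd q) e + ennreal eps"
      using RN1_le_risk1_at_net_point[where tau = tau and zeta = zeta, OF S(1,2) net[OF e]] e
      by (auto simp: bounded_estimators_def)
    then have "ennreal r0 \<le> ennreal (r q e + eps)"
      using r[OF e q(1)] eps r0 r_nonneg[of q e]
      by (simp add: ennreal_plus[symmetric] del: ennreal_plus)
    then have "r0 \<le> r q e + eps"
      using eps r_nonneg[of q e] by (subst (asm) ennreal_le_iff) auto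
    then have "0 \<le> f q e" by (simp add: f_def)
    then show ?thesis using q(1) by blast
  qed
  moreover have "\<exists>e\<in>?E. \<forall>q\<in>S. f q e \<le> \<mu> * f q e1 + (1 - \<mu>) * f q e2"
    if e12: "e1 \<in> ?E" "e2 \<in> ?E" and \<mu>: "0 \<le> \<mu>" "\<mu> \<le> 1" for e1 e2 \<mu>
  proof
    let ?e = "\<lambda>u v. \<mu> * e1 u v + (1 - \<mu>) * e2 u v"
    show "?e \<in> ?E" using e12 \<mu> by (rule mixture_in_bounded_estimators)
    have "r q ?e \<le> \<mu> * r q e1 + (1 - \<mu>) * r q e2" if "q \<in> S" for q
      unfolding r_def using e12 \<mu> q_tau[OF that] by (rule enn2real_risk1_mixture_le)
    then show "\<forall>q\<in>S. f q ?e \<le> \<mu> * f q e1 + (1 - \<mu>) * f q e2"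
      by (simp add: f_def algebra_simps)
  qed
  ultimately obtain w where w: "\<forall>q\<in>S. 0 \<le> w q" "sum w S = 1" "\<forall>e\<in>?E. 0 \<le> (\<Sum>q\<in>S. w q * f q e)"
    using finite_minimax[of S ?E f] S(1,2) by blast
  have "RN1 tau zeta s \<le> (\<Sum>q\<in>S. ennreal (w q) * risk1 s (fst q) (snd q) e) + ennreal eps"
    if e: "e \<in> ?E" for e
  proof -
    have "(\<Sum>q\<in>S. w q * f q e) = (\<Sum>q\<in>S. w q * r q e) - (r0 - eps)"
      using w(2) by (simp add: f_def right_diff_distrib sum_subtractf sum_distrib_right[symmetric])
    then have "r0 \<le> (\<Sum>q\<in>S. w q * r q e) + eps" using w(3) e by fastforce
    then have "ennreal r0 \<le> ennreal (\<Sum>q\<in>S. w q * r q e) + ennreal eps"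
      using eps w(1) r_nonneg by (subst ennreal_plus[symmetric]) (auto intro!: ennreal_leI sum_nonneg)
    also have "ennreal (\<Sum>q\<in>S. w q * r q e) = (\<Sum>q\<in>S. ennreal (w q) * risk1 s (fst q) (snd q) e)"
      using w(1) r[OF e] r_nonneg by (subst sum_ennreal[symmetric]) (auto simp: ennreal_mult intro!: sum.cong)
    finally show ?thesis by (simp add: r0)
  qed
  then show ?thesis using that S(1,3) w(1,2) by simp
qed

lemma pmf_of_finite_weights:
  assumes S: "finite S" and w: "\<forall>q\<in>S. 0 \<le> w q" "sum w S = 1"
  obtains \<pi> where "set_pmf \<pi> \<subseteq> S" "\<And>f. (\<integral>\<^sup>+q. f q \<partial>\<pi>) = (\<Sum>q\<in>S. f q * ennreal (w q))"
proof -
  define v where "v q = (if q \<in> S then w q else 0)" for q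
  have v_nonneg: "0 \<le> v q" for q using w(1) by (simp add: v_def)
  have "(\<integral>\<^sup>+q. ennreal (v q) \<partial>count_space UNIV) = (\<integral>\<^sup>+q. ennreal (w q) * indicator S q \<partial>count_space UNIV)"
    by (intro nn_integral_cong) (simp add: v_def)
  also have "\<dots> = 1"
    using S w by (subst nn_integral_indicator_finite) auto
  finally have pmf_v: "pmf (embed_pmf v) q = v q" for q
    by (rule pmf_embed_pmf[OF v_nonneg])
  then have "set_pmf (embed_pmf v) \<subseteq> S" by (auto simp: set_pmf_eq v_def)
  moreover have "(\<integral>\<^sup>+q. f q \<partial>embed_pmf v) = (\<Sum>q\<in>S. f q * ennreal (w q))" for f
    using \<open>set_pmf (embed_pmf v) \<subseteq> S\<close> S
    by (subst nn_integral_measure_pmf_support[of S]) (auto simp: pmf_v v_def)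
  ultimately show ?thesis by (rule that)
qed

theorem RN1_le_bayes_risk:
  assumes tau: "tau \<ge> 0" and zeta: "zeta \<ge> 0" and eps: "eps > 0"
  shows "\<exists>\<pi> :: (real \<times> real) pmf. set_pmf \<pi> \<subseteq> {-tau..tau} \<times> {-zeta..zeta} \<and> finite (set_pmf \<pi>) \<and>
    (\<forall>e. (\<lambda>z. e (fst z) (snd z)) \<in> borel_measurable (borel \<Otimes>\<^sub>M borel) \<longrightarrow>
         RN1 tau zeta s \<le> (\<integral>\<^sup>+p. risk1 s (fst p) (snd p) e \<partial>\<pi>) + ennreal eps)"
proof -
  obtain S w where S: "finite S" "S \<subseteq> {-tau..tau} \<times> {-zeta..zeta}"
    and w: "\<forall>q\<in>S. 0 \<le> w q" "sum w S = 1"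
    and bayes: "\<And>e. e \<in> bounded_estimators tau \<Longrightarrow>
           RN1 tau zeta s \<le> (\<Sum>q\<in>S. ennreal (w q) * risk1 s (fst q) (snd q) e) + ennreal eps"
    by (rule bayes_weights_for_bounded_estimators[OF tau zeta eps, where s = s]) blast
  obtain \<pi> where \<pi>: "set_pmf \<pi> \<subseteq> S" "\<And>f. (\<integral>\<^sup>+q. f q \<partial>\<pi>) = (\<Sum>q\<in>S. f q * ennreal (w q))"
    using pmf_of_finite_weights[OF S(1) w] by blast
  have "RN1 tau zeta s \<le> (\<integral>\<^sup>+p. risk1 s (fst p) (snd p) e \<partial>\<pi>) + ennreal eps"
    if meas: "(\<lambda>z. e (fst z) (snd z)) \<in> borel_measurable (borel \<Otimes>\<^sub>M borel)" for e
  proof -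
    have "RN1 tau zeta s \<le> (\<Sum>q\<in>S. ennreal (w q) * risk1 s (fst q) (snd q) (\<lambda>u v. clip tau (e u v)))
        + ennreal eps"
      by (intro bayes clip_estimator_in_bounded_estimators meas tau)
    also have "\<dots> \<le> (\<Sum>q\<in>S. risk1 s (fst q) (snd q) e * ennreal (w q)) + ennreal eps"
    proof (intro add_right_mono sum_mono)
      fix q assume "q \<in> S"
      then have "\<bar>fst q\<bar> \<le> tau" using S(2) by (cases q) (auto simp: abs_le_iff)
      then show "ennreal (w q) * risk1 s (fst q) (snd q) (\<lambda>u v. clip tau (e u v))
          \<le> risk1 s (fst q) (snd q) e * ennreal (w q)"
        by (subst mult.commute) (intro mult_left_mono risk1_clip_le, simp_all)
    qed
    finally show ?thesis by (simp add: \<pi>(2))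
  qed
  then show ?thesis
    using \<pi>(1) S by (intro exI[of _ \<pi>]) (auto intro: finite_subset)
qed

section \<open>Product priors in the vector problem\<close>

lemma nn_integral_finite_pmf_swap:
  assumes "finite (set_pmf \<pi>)" "\<And>y. G y \<in> borel_measurable Q"
  shows "(\<integral>\<^sup>+y. \<integral>\<^sup>+w. G y w \<partial>Q \<partial>\<pi>) = (\<integral>\<^sup>+w. \<integral>\<^sup>+y. G y w \<partial>\<pi> \<partial>Q)"
proof -
  have "(\<integral>\<^sup>+w. \<integral>\<^sup>+y. G y w \<partial>\<pi> \<partial>Q) = (\<integral>\<^sup>+w. (\<Sum>y\<in>set_pmf \<pi>. G y w * pmf \<pi> y) \<partial>Q)"
    using assms(1) by (simp add: nn_integral_measure_pmf_finite)
  also have "\<dots> = (\<Sum>y\<in>set_pmf \<pi>. (\<integral>\<^sup>+w. G y w \<partial>Q) * pmf \<pi> y)"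
    using assms(2) by (simp add: nn_integral_sum nn_integral_multc)
  also have "\<dots> = (\<integral>\<^sup>+y. \<integral>\<^sup>+w. G y w \<partial>Q \<partial>\<pi>)"
    using assms(1) by (simp add: nn_integral_measure_pmf_finite)
  finally show ?thesis ..
qed

definition theta_of :: "('d \<Rightarrow> real \<times> real) \<Rightarrow> real ^ 'd::finite" where
  "theta_of P = (\<chi> j. fst (P j))"

definition delta_of :: "('d \<Rightarrow> real \<times> real) \<Rightarrow> real ^ 'd::finite" where
  "delta_of P = (\<chi> j. snd (P j))"

lemma theta_of_nth [simp]: "theta_of P $ j = fst (P j)"
  by (simp add: theta_of_def)

lemma delta_of_nth [simp]: "delta_of P $ j = snd (P j)"
  by (simp add: delta_of_def)

lemma (in prob_space) le_nn_integral_add_const: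
  assumes "\<And>x. x \<in> space M \<Longrightarrow> r \<le> f x + c" "f \<in> borel_measurable M"
  shows "r \<le> (\<integral>\<^sup>+x. f x \<partial>M) + c"
proof -
  have "r = (\<integral>\<^sup>+x. r \<partial>M)" by (simp add: emeasure_space_1)
  also have "\<dots> \<le> (\<integral>\<^sup>+x. f x + c \<partial>M)" using assms(1) by (intro nn_integral_mono) auto
  also have "\<dots> = (\<integral>\<^sup>+x. f x \<partial>M) + c" using assms(2) by (simp add: nn_integral_add emeasure_space_1)
  finally show ?thesis .
qed

lemma nn_integral_Pi_pmf_split:
  fixes \<pi> :: "'i::finite \<Rightarrow> 'a pmf"
  shows "(\<integral>\<^sup>+P. f P \<partial>Pi_pmf UNIV d \<pi>) = (\<integral>\<^sup>+P. \<integral>\<^sup>+y. f (P(i := y)) \<partial>\<pi> i \<partial>Pi_pmf (UNIV - {i}) d \<pi>)"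
proof -
  have "Pi_pmf UNIV d \<pi> = map_pmf (\<lambda>(y, P). P(i := y)) (pair_pmf (\<pi> i) (Pi_pmf (UNIV - {i}) d \<pi>))"
    using Pi_pmf_insert[of "UNIV - {i}" i d \<pi>] by (simp add: insert_absorb)
  then show ?thesis
    by (simp, subst pair_commute_pmf) (simp add: nn_integral_pair_pmf' case_prod_beta)
qed

lemma AE_Pi_pmf_hrect:
  assumes "\<And>i. set_pmf (\<pi> i) \<subseteq> {-tau $ i..tau $ i} \<times> {-zeta $ i..zeta $ i}"
  shows "AE P in Pi_pmf UNIV d \<pi>. theta_of P \<in> hrect tau \<and> delta_of P \<in> hrect zeta"
proof (rule AE_pmfI)
  fix P assume "P \<in> set_pmf (Pi_pmf UNIV d \<pi>)"
  then have mem: "P j \<in> {-tau $ j..tau $ j} \<times> {-zeta $ j..zeta $ j}" for j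
    using assms by (force simp: set_Pi_pmf PiE_dflt_def)
  have "\<bar>fst (P j)\<bar> \<le> tau $ j \<and> \<bar>snd (P j)\<bar> \<le> zeta $ j" for j
    using mem[of j] by (cases "P j") (auto simp: abs_le_iff)
  then show "theta_of P \<in> hrect tau \<and> delta_of P \<in> hrect zeta"
    by (simp add: hrect_def)
qed

text \<open>Under a product prior, the other coordinates' observations are independent of
  \<open>(\<theta>$i, \<delta>$i)\<close> and act on coordinate \<open>i\<close> only as external randomization, so any bound on
  the scalar Bayes risk under the \<open>i\<close>-th factor bounds the \<open>i\<close>-th coordinate risk as well.\<close>

lemma coord_bayes_risk_ge:
  fixes D :: "real ^ 'd ^ 'd" and est :: "real ^ 'd \<Rightarrow> real ^ 'd \<Rightarrow> real ^ 'd"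
  assumes D: "diag_mat D"
    and meas: "(\<lambda>z. est (fst z) (snd z)) \<in> borel_measurable (borel \<Otimes>\<^sub>M borel)"
    and fin: "finite (set_pmf (\<pi> i))"
    and bayes: "\<And>e. (\<lambda>z. e (fst z) (snd z)) \<in> borel_measurable (borel \<Otimes>\<^sub>M borel) \<Longrightarrow>
                  r \<le> (\<integral>\<^sup>+p. risk1 (D $ i $ i) (fst p) (snd p) e \<partial>\<pi> i) + c"
  shows "r \<le> (\<integral>\<^sup>+P. \<integral>\<^sup>+\<omega>. ennreal ((est (fst (unzip_vec \<omega>)) (snd (unzip_vec \<omega>)) $ i - fst (P i))\<^sup>2)
                \<partial>gauss_pairs (D *v theta_of P + delta_of P) (theta_of P) \<partial>Pi_pmf UNIV d \<pi>) + c"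
proof -
  define R where "R P = (\<integral>\<^sup>+\<omega>. ennreal ((est (fst (unzip_vec \<omega>)) (snd (unzip_vec \<omega>)) $ i - fst (P i))\<^sup>2)
      \<partial>gauss_pairs (D *v theta_of P + delta_of P) (theta_of P))" for P
  define Q where "Q P = PiM (UNIV - {i}) (\<lambda>j. gauss1 (D $ j $ j * fst (P j) + snd (P j)) \<Otimes>\<^sub>M gauss1 (fst (P j)))"
    for P :: "'d \<Rightarrow> real \<times> real"
  define G where "G y w = risk1 (D $ i $ i) (fst y) (snd y) (coord_estimator est i w)" for y w
  have "R P = (\<integral>\<^sup>+w. G (P i) w \<partial>Q P)" for P
    unfolding R_def G_def Q_def
    using coord_risk_eq_nn_integral_risk1[OF D meas, where i = i and th = "theta_of P" and de = "delta_of P"]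
    by (simp add: diag_mat_mult_vec_nth[OF D])
  moreover have "Q (P(i := y)) = Q P" for P y
    unfolding Q_def by (intro PiM_cong) auto
  ultimately have R_eq: "R (P(i := y)) = (\<integral>\<^sup>+w. G y w \<partial>Q P)" for P y
    by simp
  have inner: "r \<le> (\<integral>\<^sup>+y. R (P(i := y)) \<partial>\<pi> i) + c" for P
  proof -
    interpret Q: prob_space "Q P" unfolding Q_def by (intro prob_space_PiM) simp
    have meas_G: "G y \<in> borel_measurable (Q P)" for y
      unfolding G_def Q_def by (rule borel_measurable_risk1_coord_estimator[OF meas]) simp
    have "(\<lambda>w. \<integral>\<^sup>+y. G y w \<partial>\<pi> i) = (\<lambda>w. \<Sum>y\<in>set_pmf (\<pi> i). G y w * pmf (\<pi> i) y)"
      using fin by (simp add: nn_integral_measure_pmf_finite)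
    then have "(\<lambda>w. \<integral>\<^sup>+y. G y w \<partial>\<pi> i) \<in> borel_measurable (Q P)"
      using meas_G by simp
    then have "r \<le> (\<integral>\<^sup>+w. \<integral>\<^sup>+y. G y w \<partial>\<pi> i \<partial>Q P) + c"
      unfolding G_def by (intro Q.le_nn_integral_add_const bayes borel_measurable_coord_estimator[OF meas])
    also have "\<dots> = (\<integral>\<^sup>+y. R (P(i := y)) \<partial>\<pi> i) + c"
      by (simp add: nn_integral_finite_pmf_swap[OF fin meas_G] R_eq)
    finally show ?thesis .
  qed
  have "r \<le> (\<integral>\<^sup>+P. \<integral>\<^sup>+y. R (P(i := y)) \<partial>\<pi> i \<partial>Pi_pmf (UNIV - {i}) d \<pi>) + c"
    by (rule measure_pmf.le_nn_integral_add_const) (simp_all add: inner)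
  then show ?thesis by (simp add: R_def nn_integral_Pi_pmf_split[where d = d and \<pi> = \<pi> and i = i])
qed

lemma sum_RN1_le_worst_riskv:
  fixes D :: "real ^ 'd ^ 'd" and tau zeta :: "real ^ 'd" and est :: "real ^ 'd \<Rightarrow> real ^ 'd \<Rightarrow> real ^ 'd"
  assumes D: "diag_mat D" and tau: "\<forall>i. tau $ i \<ge> 0" and zeta: "\<forall>i. zeta $ i \<ge> 0"
    and meas: "(\<lambda>z. est (fst z) (snd z)) \<in> borel_measurable (borel \<Otimes>\<^sub>M borel)"
  shows "(\<Sum>i\<in>UNIV. RN1 (tau $ i) (zeta $ i) (D $ i $ i)) \<le> worst_riskv tau zeta D est"
proof (rule ennreal_le_epsilon)
  fix eps :: real assume eps: "0 < eps"
  define e' where "e' = eps / CARD('d)"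
  have e': "0 < e'" using eps by (simp add: e'_def)
  have "\<forall>i. \<exists>\<pi>. set_pmf \<pi> \<subseteq> {-tau $ i..tau $ i} \<times> {-zeta $ i..zeta $ i} \<and> finite (set_pmf \<pi>) \<and>
      (\<forall>e. (\<lambda>z. e (fst z) (snd z)) \<in> borel_measurable (borel \<Otimes>\<^sub>M borel) \<longrightarrow>
        RN1 (tau $ i) (zeta $ i) (D $ i $ i) \<le> (\<integral>\<^sup>+p. risk1 (D $ i $ i) (fst p) (snd p) e \<partial>\<pi>) + ennreal e')"
    using tau zeta e' by (blast intro: RN1_le_bayes_risk)
  then obtain \<pi> where \<pi>: "\<forall>i. set_pmf (\<pi> i) \<subseteq> {-tau $ i..tau $ i} \<times> {-zeta $ i..zeta $ i} \<and>
      finite (set_pmf (\<pi> i)) \<and>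
      (\<forall>e. (\<lambda>z. e (fst z) (snd z)) \<in> borel_measurable (borel \<Otimes>\<^sub>M borel) \<longrightarrow>
        RN1 (tau $ i) (zeta $ i) (D $ i $ i) \<le> (\<integral>\<^sup>+p. risk1 (D $ i $ i) (fst p) (snd p) e \<partial>\<pi> i) + ennreal e')"
    by (auto dest: choice)
  define Pr where "Pr = Pi_pmf UNIV (0 :: real, 0 :: real) \<pi>"
  define R where "R i P = (\<integral>\<^sup>+\<omega>. ennreal ((est (fst (unzip_vec \<omega>)) (snd (unzip_vec \<omega>)) $ i - fst (P i))\<^sup>2)
      \<partial>gauss_pairs (D *v theta_of P + delta_of P) (theta_of P))" for i P
  have "AE P in Pr. theta_of P \<in> hrect tau \<and> delta_of P \<in> hrect zeta"
    unfolding Pr_def using \<pi> by (intro AE_Pi_pmf_hrect) blast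
  from nn_integral_riskv_le_worst_riskv[OF measure_pmf.prob_space_axioms this, where D = D and est = est]
  have worst: "(\<integral>\<^sup>+P. (\<Sum>i\<in>UNIV. R i P) \<partial>Pr) \<le> worst_riskv tau zeta D est"
    unfolding riskv_eq_sum_coords[OF meas] R_def by simp
  have "(\<Sum>i\<in>UNIV. RN1 (tau $ i) (zeta $ i) (D $ i $ i)) \<le> (\<Sum>i\<in>UNIV. (\<integral>\<^sup>+P. R i P \<partial>Pr) + ennreal e')"
    unfolding Pr_def R_def using \<pi> by (intro sum_mono coord_bayes_risk_ge[OF D meas]) blast+
  also have "\<dots> = (\<Sum>i\<in>UNIV. \<integral>\<^sup>+P. R i P \<partial>Pr) + (\<Sum>i\<in>(UNIV :: 'd set). ennreal e')"
    by (rule sum.distrib)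
  also have "(\<Sum>i\<in>(UNIV :: 'd set). ennreal e') = ennreal eps"
    using e' by (subst sum_ennreal) (auto simp: e'_def)
  also have "(\<Sum>i\<in>UNIV. \<integral>\<^sup>+P. R i P \<partial>Pr) = (\<integral>\<^sup>+P. (\<Sum>i\<in>UNIV. R i P) \<partial>Pr)"
    by (rule nn_integral_sum[symmetric]) auto
  finally show "(\<Sum>i\<in>UNIV. RN1 (tau $ i) (zeta $ i) (D $ i $ i)) \<le> worst_riskv tau zeta D est + ennreal eps"
    using worst by (meson add_right_mono order_trans)
qed

lemma RN_vec_le_sum_RN1:
  fixes D :: "real ^ 'd ^ 'd" and tau zeta :: "real ^ 'd"
  assumes D: "diag_mat D"
  shows "RN_vec tau zeta D \<le> (\<Sum>i\<in>UNIV. RN1 (tau $ i) (zeta $ i) (D $ i $ i))"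
proof -
  let ?M = "{e :: real \<Rightarrow> real \<Rightarrow> real. (\<lambda>z. e (fst z) (snd z)) \<in> borel_measurable (borel \<Otimes>\<^sub>M borel)}"
  have "RN_vec tau zeta D \<le> (\<Sum>i\<in>UNIV. worst_risk1 (tau $ i) (zeta $ i) (D $ i $ i) (g i))"
    if g: "g \<in> Pi UNIV (\<lambda>_. ?M)" for g
  proof -
    have meas: "(\<lambda>z. g i (fst z) (snd z)) \<in> borel_measurable (borel \<Otimes>\<^sub>M borel)" for i
      using g by auto
    have "(\<lambda>z. \<chi> i. g i (fst z $ i) (snd z $ i)) \<in> borel_measurable (borel \<Otimes>\<^sub>M borel)"
      using meas by (rule borel_measurable_separable_estimator)
    then have "RN_vec tau zeta D \<le> worst_riskv tau zeta D (\<lambda>x y. \<chi> i. g i (x $ i) (y $ i))"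
      unfolding RN_vec_def by (intro INF_lower) simp
    also have "\<dots> \<le> (\<Sum>i\<in>UNIV. worst_risk1 (tau $ i) (zeta $ i) (D $ i $ i) (g i))"
      by (rule worst_riskv_separable_le[OF D meas])
    finally show ?thesis .
  qed
  then have "RN_vec tau zeta D
      \<le> (INF g\<in>Pi UNIV (\<lambda>_. ?M). \<Sum>i\<in>UNIV. worst_risk1 (tau $ i) (zeta $ i) (D $ i $ i) (g i))"
    by (rule INF_greatest)
  also have "\<dots> \<le> (\<Sum>i\<in>UNIV. INF e\<in>?M. worst_risk1 (tau $ i) (zeta $ i) (D $ i $ i) e)"
    by (rule INF_Pi_sum_le_sum_INF) simp
  finally show ?thesis by (simp add: RN1_def)
qed

theorem RN_vec_eq_sum_RN1:
  fixes D :: "real ^ 'd ^ 'd" and tau zeta :: "real ^ 'd"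
  assumes "diag_mat D" "\<forall>i. tau $ i \<ge> 0" "\<forall>i. zeta $ i \<ge> 0"
  shows "RN_vec tau zeta D = (\<Sum>i\<in>UNIV. RN1 (tau $ i) (zeta $ i) (D $ i $ i))"
proof (rule antisym)
  show "(\<Sum>i\<in>UNIV. RN1 (tau $ i) (zeta $ i) (D $ i $ i)) \<le> RN_vec tau zeta D"
    unfolding RN_vec_def by (intro INF_greatest sum_RN1_le_worst_riskv[OF assms]) simp
qed (rule RN_vec_le_sum_RN1[OF assms(1)])

theorem proposition6:
  fixes D :: "real ^ 'd ^ 'd" and tau zeta :: "real ^ 'd"
  assumes "diag_mat D"
    and "\<forall>i. tau $ i \<ge> 0" and "\<forall>i. zeta $ i \<ge> 0"
  shows "RL_vec tau zeta D = (\<Sum>i\<in>UNIV. RL1 (tau $ i) (zeta $ i) (D $ i $ i))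
         \<and> (\<forall>A B. minimax_linear tau zeta D A B \<longrightarrow> diag_mat A \<and> diag_mat B)
         \<and> RN_vec tau zeta D = (\<Sum>i\<in>UNIV. RN1 (tau $ i) (zeta $ i) (D $ i $ i))"
  using RL_vec_eq_sum_RL1_and_minimax_linear_diag[OF assms] RN_vec_eq_sum_RN1[OF assms] by blast

end
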